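(* Let $uv$ be a decomposable word, with $u=w_1\cdots w_k$. Suppose that site $j_0$ of $u$ is empty ($u_{j_0}=\infty$), and that there is a site $j$ with $j_0<j\le k$ such that $u_j$ is a particle of maximal size (the largest finite entry of $uv$) and no entry of $u$ strictly between positions $j_0$ and $j$ is empty or of maximal size. Then \[ [uv]=\sum_{u'} t_{u'_{j_0}}\,[u'v], \] where the sum extends over all words $u'$ of length $k$ (with $u'_{j_0}$ finite) such that $u'^{j_0\to}=u$, the operation $\to$ being applied to $u'$ regarded as a word of length $k$ on its own cyclic ring. Moreover, the words $u'v$ occurring on the right-hand side are decomposable and simpler than $uv$.
   Context: Fix a positive integer $n$; sites $1,\dots,n$ are arranged cyclically. A word is $w=w_1\cdots w_n\in\{1,2,\dots,\infty\}^n$; finite entries are particles, entries $\infty$ are empty sites; $\infty$ is larger than every finite entry. A type is a tuple $\mathbf m=(m_1,\dots,m_r)$ of positive integers with $m_1+\dots+m_r\le n$; a word has type $\mathbf m$ if it has exactly $m_i$ entries $i$ and all other entries $\infty$. A word $w$ is decomposable if $w=uv$ with $u=w_1\cdots w_k$, $v=w_{k+1}\cdots w_n$ and every entry of $u$ strictly larger than every entry of $v$. Queues: a queue of capacity $c$ is a choice of $c$ of the $n$ sites, called terminal. Given an input word $x$ whose finite entries lie in $\{1,\dots,i-1\}$, replace each $\infty$ by $i$; then the $n$ particles enter the queue one at a time in an order in which smaller particles come before larger ones (ties arbitrary). A particle at site $j$ first visits site $j$, then $j+1,j+2,\dots$ cyclically, stopping at (and occupying) the first terminal site not yet occupied; if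 all terminal sites are occupied it visits every site and is discarded. The output $q(x)$ has at each terminal site the size of the particle occupying it and $\infty$ at each non-terminal site. For each size $s$ let $\alpha_s$ be the number of non-terminal sites whose first visitor has size $s$; the weight of $q$ with respect to $x$ is $\prod_s t_s^{\alpha_s}$. Multi-line queues: a multi-line queue of type $(m_1,\dots,m_r)$ is a sequence $(q_1,\dots,q_r)$ of queues with $q_i$ of capacity $m_1+\dots+m_i$. Feed $q_1$ the all-$\infty$ word and $q_i$ the output of $q_{i-1}$; the output word is $w(\mathbf q)=(q_r\circ\cdots\circ q_1)(\infty\cdots\infty)$. The weight $[\mathbf q]$ is the product over $i$ of the weight of $q_i$ with respect to its input. For a word $w$, $[w]$ is the sum of $[\mathbf q]$ over all multi-line queues $\mathbf q$ with $w(\mathbf q)=w$. Jumping operation: for a word $x=x_1\cdots x_\ell$ (positions taken cyclically mod $\ell$) and an index $j_0$ with $x_{j_0}\neq\infty$, define the jumping sequence $j_1,\dots,j_s$ recursively: $j_k$ is the first position cyclically to the right of $j_{k-1}$ such that $x_{j_k}$ is finite and strictly larger than $x_{j_{k-1}}$; if no such position exists the sequence stops and $s=k-1$. Define $y=x^{j_0\to}$ by $y_{j_k}=x_{j_{k-1}}$ for $1\le k\le s$, $y_{j_0}=\infty$, and $y_j=x_j$ at all other positions. Simpler: a type $(m_1,\dots,m_s)$ is simpler than a type $(m'_1,\dots,m'_r)$ if $s<r$, or $s=r$ and $m_s>m'_r$. For words $x,y$ of the same length, $y$ is simpler than $x$ if either the type of $y$ is simpler than that of $x$, or $x,y$ have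 the same type and, letting $i,j$ be the smallest indices with $x_i=\infty$ and $y_j=\infty$, we have $i>j$. *)

theory Defs
  imports Main "HOL-Library.Extended_Nat"
begin

text \<open>Words are lists of extended naturals; \<infinity> is an empty site, finite entries
  (which must be positive) are particles.  Sites are indexed 0..n-1 (0-based).\<close>

definition is_word :: "enat list \<Rightarrow> bool" where
  "is_word w \<longleftrightarrow> (\<forall>x\<in>set w. x \<noteq> 0)"

definition maxsize :: "enat list \<Rightarrow> nat" where
  "maxsize w = Max (insert 0 {the_enat x | x. x \<in> set w \<and> x \<noteq> \<infinity>})"

definition is_type :: "nat \<Rightarrow> nat list \<Rightarrow> bool" where
  "is_type n m \<longleftrightarrow> m \<noteq> [] \<and> (\<forall>a\<in>set m. 0 < a) \<and> sum_list m \<le> n"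

text \<open>The counting tuple (m_1,...,m_r) of a word, r = largest finite entry; for a word of
  type m this is exactly m.\<close>
definition word_type :: "enat list \<Rightarrow> nat list" where
  "word_type w = map (\<lambda>i. count_list w (enat i)) [1..<Suc (maxsize w)]"

definition decomposable :: "enat list \<Rightarrow> bool" where
  "decomposable w \<longleftrightarrow> (\<exists>k. 0 < k \<and> k < length w \<and>
      (\<forall>a<k. \<forall>b. k \<le> b \<and> b < length w \<longrightarrow> w ! b < w ! a))"

definition psize :: "nat \<Rightarrow> enat list \<Rightarrow> nat \<Rightarrow> nat" where
  "psize i x p = (if x ! p = \<infinity> then i else the_enat (x ! p))"

text \<open>One particle (size s, starting site j) enters the queue with terminal set T.
  State: occupant of each site, and size of the first visitor of each site.\<close>
definition qstep :: "nat \<Rightarrow> nat set \<Rightarrow> nat \<times> nat \<Rightarrow>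
    (nat \<Rightarrow> nat option) \<times> (nat \<Rightarrow> nat option) \<Rightarrow> (nat \<Rightarrow> nat option) \<times> (nat \<Rightarrow> nat option)" where
  "qstep n T sp st = (case sp of (s, j) \<Rightarrow> (case st of (occ, fv) \<Rightarrow>
     (let D = {d. d < n \<and> (j + d) mod n \<in> T \<and> occ ((j + d) mod n) = None};
          V = (if D = {} then {..<n} else (\<lambda>e. (j + e) mod n) ` {..Min D});
          fv' = (\<lambda>q. if q \<in> V \<and> fv q = None then Some s else fv q)
      in if D = {} then (occ, fv') else (occ((j + Min D) mod n := Some s), fv'))))"

text \<open>Particles enter in order of increasing size (ties broken by site index).\<close>
definition queue_run :: "nat \<Rightarrow> nat set \<Rightarrow> nat \<Rightarrow> enat list \<Rightarrow>
    (nat \<Rightarrow> nat option) \<times> (nat \<Rightarrow> nat option)" where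
  "queue_run n T i x = fold (qstep n T) (map (\<lambda>p. (psize i x p, p)) (sort_key (psize i x) [0..<n]))
      (\<lambda>_. None, \<lambda>_. None)"

definition queue_out :: "nat \<Rightarrow> nat set \<Rightarrow> nat \<Rightarrow> enat list \<Rightarrow> enat list" where
  "queue_out n T i x = map (\<lambda>p. if p \<in> T then (case fst (queue_run n T i x) p of
      Some s \<Rightarrow> enat s | None \<Rightarrow> \<infinity>) else \<infinity>) [0..<n]"

definition queue_wt :: "(nat \<Rightarrow> 'a::comm_semiring_1) \<Rightarrow> nat \<Rightarrow> nat set \<Rightarrow> nat \<Rightarrow> enat list \<Rightarrow> 'a" where
  "queue_wt t n T i x = (\<Prod>p\<in>{..<n} - T. t (the (snd (queue_run n T i x) p)))"

fun mlq_out :: "nat \<Rightarrow> nat \<Rightarrow> nat set list \<Rightarrow> enat list \<Rightarrow> enat list" where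
  "mlq_out n i [] x = x"
| "mlq_out n i (T # Ts) x = mlq_out n (Suc i) Ts (queue_out n T i x)"

fun mlq_wt :: "(nat \<Rightarrow> 'a::comm_semiring_1) \<Rightarrow> nat \<Rightarrow> nat \<Rightarrow> nat set list \<Rightarrow> enat list \<Rightarrow> 'a" where
  "mlq_wt t n i [] x = 1"
| "mlq_wt t n i (T # Ts) x = queue_wt t n T i x * mlq_wt t n (Suc i) Ts (queue_out n T i x)"

definition is_mlq :: "nat \<Rightarrow> nat list \<Rightarrow> nat set list \<Rightarrow> bool" where
  "is_mlq n m Ts \<longleftrightarrow> is_type n m \<and> length Ts = length m \<and>
     (\<forall>i<length m. Ts ! i \<subseteq> {..<n} \<and> card (Ts ! i) = sum_list (take (Suc i) m))"

definition mlq_word :: "nat \<Rightarrow> nat set list \<Rightarrow> enat list" where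
  "mlq_word n Ts = mlq_out n 1 Ts (replicate n \<infinity>)"

definition mlq_weight :: "(nat \<Rightarrow> 'a::comm_semiring_1) \<Rightarrow> nat \<Rightarrow> nat set list \<Rightarrow> 'a" where
  "mlq_weight t n Ts = mlq_wt t n 1 Ts (replicate n \<infinity>)"

text \<open>[w], evaluated at the parameters t_1, t_2, ...\<close>
definition word_weight :: "(nat \<Rightarrow> 'a::comm_semiring_1) \<Rightarrow> enat list \<Rightarrow> 'a" where
  "word_weight t w = (\<Sum>Ts\<in>{Ts. \<exists>m. is_mlq (length w) m Ts \<and> mlq_word (length w) Ts = w}.
      mlq_weight t (length w) Ts)"

definition next_jump :: "enat list \<Rightarrow> nat \<Rightarrow> nat option" where
  "next_jump x j = (let l = length x;
      D = {d. 0 < d \<and> d < l \<and> x ! ((j + d) mod l) \<noteq> \<infinity> \<and> x ! j < x ! ((j + d) mod l)}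
    in if D = {} then None else Some ((j + Min D) mod l))"

fun jump_aux :: "enat list \<Rightarrow> nat \<Rightarrow> nat \<Rightarrow> enat list \<Rightarrow> enat list" where
  "jump_aux x j 0 y = y"
| "jump_aux x j (Suc f) y = (case next_jump x j of None \<Rightarrow> y
      | Some j' \<Rightarrow> jump_aux x j' f (y[j' := x ! j]))"

text \<open>jump x j0 is x^{j0 ->}.\<close>
definition jump :: "enat list \<Rightarrow> nat \<Rightarrow> enat list" where
  "jump x j0 = jump_aux x j0 (length x) (x[j0 := \<infinity>])"

definition simpler_type :: "nat list \<Rightarrow> nat list \<Rightarrow> bool" where
  "simpler_type ms mr \<longleftrightarrow> length ms < length mr \<or>
     (length ms = length mr \<and> ms \<noteq> [] \<and> last ms > last mr)"

definition first_inf :: "enat list \<Rightarrow> nat" where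
  "first_inf x = (LEAST i. i < length x \<and> x ! i = \<infinity>)"

definition simpler :: "enat list \<Rightarrow> enat list \<Rightarrow> bool" where
  "simpler y x \<longleftrightarrow> simpler_type (word_type y) (word_type x) \<or>
     (word_type y = word_type x \<and> (\<exists>i<length x. x ! i = \<infinity>) \<and> (\<exists>j<length y. y ! j = \<infinity>)
      \<and> first_inf y < first_inf x)"

end

theory Submission
  imports Defs "HOL-Library.Multiset"
begin

text \<open>The jump operation has a closed form: reading the word cyclically from \<open>j0\<close>, every finite
  entry exceeding all finite entries read before it is replaced by the largest of those, and the
  entry at \<open>j0\<close> becomes \<open>\<infinity>\<close>.  Encode the configuration of a queue during its run by writing a
  value \<open>hi\<close>, larger than every particle, on the terminal sites that are still free.  Running the
  queue with terminal set \<open>T\<close> (containing \<open>j0\<close>) and the queue with terminal set \<open>T - {j0}\<close> on the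
  same input, induction over the arriving particles shows that the second configuration is always
  the jump at \<open>j0\<close> of the first; in particular the output of the second queue is the jump at \<open>j0\<close>
  of the output of the first.  When a particle of maximal size ends up at a site \<open>j\<close> and all sites
  strictly between \<open>j0\<close> and \<open>j\<close> are terminal, the two queues have the same first visitors except
  at \<open>j0\<close>, whose first visitor is the particle stopping there in the first queue.  Adding or
  removing \<open>j0\<close> in the last queue is therefore a bijection between multi-line queues for \<open>uv\<close> and
  pairs of a preimage \<open>u'\<close> with a multi-line queue for \<open>u'v\<close>, changing the weight by the factor
  \<open>t (u' ! j0)\<close>.  Finally \<open>u'v\<close> has one more particle of maximal size than \<open>uv\<close>, so it is simpler,
  and it is still decomposable since \<open>u'\<close> differs from \<open>u\<close> only by entries at least \<open>u' ! j0\<close>, a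
  value that occurs in \<open>u\<close>.\<close>

section \<open>Cyclic distance\<close>

definition cdist :: "nat \<Rightarrow> nat \<Rightarrow> nat \<Rightarrow> nat" where
  "cdist n b q = (q + n - b) mod n"

lemma cdist_less: "b < n \<Longrightarrow> cdist n b q < n"
  by (simp add: cdist_def)

lemma cdist_self[simp]: "b < n \<Longrightarrow> cdist n b b = 0"
  by (simp add: cdist_def)

lemma cdist_add_mod: assumes "b < n" shows "cdist n b ((a + d) mod n) = (cdist n b a + d) mod n"
proof -
  have "cdist n b ((a + d) mod n) = ((a + d) mod n + (n - b)) mod n"
    using assms by (simp add: cdist_def)
  also have "\<dots> = ((a + (n - b)) mod n + d) mod n"
    by (metis mod_add_left_eq add.commute add.left_commute)
  finally show ?thesis using assms by (simp add: cdist_def)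
qed

lemma cdist_eq: assumes "b < n" "q < n" shows "cdist n b q = (if b \<le> q then q - b else q + n - b)"
proof (cases "b \<le> q")
  case True
  hence "q + n - b = (q - b) + n" by simp
  hence "cdist n b q = (q - b) mod n" unfolding cdist_def by simp
  thus ?thesis using True assms by simp
qed (use assms in \<open>simp add: cdist_def\<close>)

lemma cdist_inj: assumes "b < n" "q < n" "r < n" "cdist n b q = cdist n b r" shows "q = r"
  using assms cdist_eq[OF assms(1) assms(2)] cdist_eq[OF assms(1) assms(3)] by (auto split: if_splits)

lemma cdist_eq_0_iff: "b < n \<Longrightarrow> q < n \<Longrightarrow> cdist n b q = 0 \<longleftrightarrow> q = b"
  using cdist_inj[of b n q b] by auto

lemma cdist_add_mod_self: "b < n \<Longrightarrow> d < n \<Longrightarrow> cdist n b ((b + d) mod n) = d"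
  using cdist_add_mod[of b n b d] by simp

lemma add_cdist_mod: assumes "b < n" "q < n" shows "(b + cdist n b q) mod n = q"
proof (rule cdist_inj[OF assms(1) _ assms(2)])
  show "(b + cdist n b q) mod n < n" using assms(1) by simp
qed (rule cdist_add_mod_self[OF assms(1) cdist_less[OF assms(1)]])

lemma cdist_of_ge: "b \<le> q \<Longrightarrow> q < n \<Longrightarrow> cdist n b q = q - b"
  using cdist_eq[of b n q] by simp

lemma cdist_split: assumes "b < n" "h < n" "q < n" "cdist n b h < cdist n b q"
  shows "cdist n b q = cdist n b h + cdist n h q"
proof -
  have "cdist n b q = (cdist n b h + cdist n h q) mod n"
    by (subst add_cdist_mod[OF assms(2,3), symmetric]) (rule cdist_add_mod[OF assms(1)])
  moreover have "cdist n h q < n" "cdist n b h < n" using assms by (simp_all add: cdist_less)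
  moreover have "(cdist n b h + cdist n h q) mod n = cdist n b h + cdist n h q - n"
    if "\<not> cdist n b h + cdist n h q < n"
    using that \<open>cdist n h q < n\<close> \<open>cdist n b h < n\<close> by (simp add: le_mod_geq)
  ultimately show ?thesis using assms(4) by (cases "cdist n b h + cdist n h q < n") auto
qed

lemma cdist_argmin_unique:
  assumes "b < n" "q1 \<in> S" "q2 \<in> S" "S \<subseteq> {..<n}"
    "\<forall>r\<in>S. cdist n b q1 \<le> cdist n b r" "\<forall>r\<in>S. cdist n b q2 \<le> cdist n b r"
  shows "q1 = q2"
  using cdist_inj[OF assms(1)] assms(2-6) by (meson le_antisym lessThan_iff subsetD)

text \<open>If \<open>h\<close> is the first site of \<open>F\<close> seen both from \<open>p\<close> and from \<open>j0\<close>, both orders agree on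
  \<open>F - {h}\<close> with the order seen from \<open>h\<close>.\<close>
lemma second_argmin_indep:
  assumes p: "p < n" and j: "j0 < n" and F: "F \<subseteq> {..<n}" and h: "h \<in> F"
    and hp: "\<forall>q\<in>F. cdist n p h \<le> cdist n p q" and hj: "\<forall>q\<in>F. cdist n j0 h \<le> cdist n j0 q"
    and q1: "q1 \<in> F - {h}" "\<forall>q\<in>F - {h}. cdist n p q1 \<le> cdist n p q"
    and q2: "q2 \<in> F - {h}" "\<forall>q\<in>F - {h}. cdist n j0 q2 \<le> cdist n j0 q"
  shows "q1 = q2"
proof -
  have hn: "h < n" using h F by auto
  have via_h: "cdist n b q = cdist n b h + cdist n h q"
    if "b < n" "q \<in> F - {h}" "cdist n b h \<le> cdist n b q" for b q
  proof -
    have "q < n" using that F by auto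
    moreover have "cdist n b h \<noteq> cdist n b q" using cdist_inj[OF that(1) hn] \<open>q < n\<close> that(2) by auto
    ultimately show ?thesis using cdist_split[OF that(1) hn] that(3) by simp
  qed
  have "cdist n h q1 \<le> cdist n h q2"
    using q1 q2 hp via_h[OF p q1(1)] via_h[OF p q2(1)] by (metis Diff_iff add_le_cancel_left)
  moreover have "cdist n h q2 \<le> cdist n h q1"
    using q1 q2 hj via_h[OF j q1(1)] via_h[OF j q2(1)] by (metis Diff_iff add_le_cancel_left)
  ultimately show ?thesis using cdist_inj[OF hn] q1(1) q2(1) F by (meson Diff_iff le_antisym lessThan_iff subsetD)
qed

lemma cdist_interval_transfer:
  assumes p: "p < n" and j: "j0 < n" and hn: "h < n" "h' < n" "r < n"
    and a: "cdist n p h < cdist n p r" "cdist n p r \<le> cdist n p h'" "cdist n j0 h < cdist n j0 h'"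
  shows "cdist n j0 h < cdist n j0 r \<and> cdist n j0 r \<le> cdist n j0 h'"
proof -
  have e1: "cdist n p r = cdist n p h + cdist n h r" by (rule cdist_split[OF p hn(1) hn(3) a(1)])
  have e2: "cdist n p h' = cdist n p h + cdist n h h'" using cdist_split[OF p hn(1) hn(2)] a by simp
  have e3: "cdist n j0 h' = cdist n j0 h + cdist n h h'" by (rule cdist_split[OF j hn(1) hn(2) a(3)])
  have le: "cdist n h r \<le> cdist n h h'" using e1 e2 a(2) by simp
  have "cdist n j0 r = (cdist n j0 h + cdist n h r) mod n"
    by (subst add_cdist_mod[OF hn(1) hn(3), symmetric]) (rule cdist_add_mod[OF j])
  moreover have "cdist n j0 h + cdist n h r < n" using le e3 cdist_less[OF j, of h'] by simp
  ultimately show ?thesis using le e1 e3 a(1) by simp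
qed

lemma cdist_less_iff_restrict:
  assumes "j0 < k" "k \<le> N" "r < k" "q < k"
  shows "cdist N j0 r < cdist N j0 q \<longleftrightarrow> cdist k j0 r < cdist k j0 q"
  using cdist_eq[of j0 N r] cdist_eq[of j0 N q] cdist_eq[OF assms(1), of r] cdist_eq[OF assms(1), of q] assms
  by (auto split: if_splits)

lemma cdist_le_imp_between:
  assumes "j0 < j" "j < n" "r < n" "0 < cdist n j0 r" "cdist n j0 r \<le> cdist n j0 j"
  shows "j0 < r \<and> r \<le> j"
  using assms cdist_eq[of j0 n r] cdist_of_ge[of j0 j n] by (auto split: if_splits)

lemma finite_argmin:
  fixes f :: "'a \<Rightarrow> nat" assumes "finite S" "S \<noteq> {}" obtains h where "h \<in> S" "\<forall>q\<in>S. f h \<le> f q"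
  using arg_min_if_finite[OF assms, of f] by (metis not_less)

section \<open>A closed form of the jumping operation\<close>

text \<open>For \<open>q = j0\<close> it is \<open>Max {}\<close>, which \<open>jump_val\<close> never consults.\<close>
definition pre_max :: "enat list \<Rightarrow> nat \<Rightarrow> nat \<Rightarrow> enat" where
  "pre_max x j0 q =
     Max {x!r | r. r < length x \<and> cdist (length x) j0 r < cdist (length x) j0 q \<and> x!r \<noteq> \<infinity>}"

definition jump_val :: "enat list \<Rightarrow> nat \<Rightarrow> nat \<Rightarrow> enat" where
  "jump_val x j0 q =
     (if q = j0 then \<infinity> else if x!q \<noteq> \<infinity> \<and> pre_max x j0 q < x!q then pre_max x j0 q else x!q)"

lemma finite_nth_set: "finite {x!r | r. r < length x \<and> P r}"
  using finite_subset[of _ "(!) x ` {..<length x}"] by auto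

lemma pre_max_ge:
  "r < length x \<Longrightarrow> cdist (length x) j0 r < cdist (length x) j0 q \<Longrightarrow> x!r \<noteq> \<infinity> \<Longrightarrow> x!r \<le> pre_max x j0 q"
  unfolding pre_max_def by (rule Max_ge[OF finite_nth_set]) auto

lemma pre_max_eqI:
  assumes "a < length x" "cdist (length x) j0 a < cdist (length x) j0 q" "x!a \<noteq> \<infinity>"
    "\<And>r. r < length x \<Longrightarrow> cdist (length x) j0 r < cdist (length x) j0 q \<Longrightarrow> x!r \<noteq> \<infinity> \<Longrightarrow> x!r \<le> x!a"
  shows "pre_max x j0 q = x!a"
  unfolding pre_max_def by (rule Max_eqI[OF finite_nth_set]) (use assms in auto)

lemma pre_max_le:
  assumes "\<And>r. r < length x \<Longrightarrow> cdist (length x) j0 r < cdist (length x) j0 q \<Longrightarrow> x!r \<noteq> \<infinity> \<Longrightarrow> x!r \<le> c"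
    "a < length x" "cdist (length x) j0 a < cdist (length x) j0 q" "x!a \<noteq> \<infinity>"
  shows "pre_max x j0 q \<le> c"
  unfolding pre_max_def using assms by (subst Max_le_iff[OF finite_nth_set]) auto

lemma pre_max_cong:
  assumes "length x = length x'"
    "\<And>r. r < length x \<Longrightarrow> cdist (length x) j0 r < cdist (length x) j0 q \<Longrightarrow> x!r = x'!r"
  shows "pre_max x j0 q = pre_max x' j0 q"
  unfolding pre_max_def by (rule arg_cong[where f = Max]) (use assms in force)

lemma jump_val_cong:
  assumes "length x = length x'"
    "\<And>r. r < length x \<Longrightarrow> cdist (length x) j0 r \<le> cdist (length x) j0 q \<Longrightarrow> x!r = x'!r"
    "q < length x"
  shows "jump_val x j0 q = jump_val x' j0 q"
proof -
  have "pre_max x j0 q = pre_max x' j0 q" by (rule pre_max_cong) (use assms in auto)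
  moreover have "x!q = x'!q" using assms by auto
  ultimately show ?thesis unfolding jump_val_def by simp
qed

lemma length_jump_aux: "length (jump_aux x j f y) = length y"
  by (induction f arbitrary: j y) (auto split: option.split)

lemma length_jump[simp]: "length (jump x j) = length x"
  unfolding jump_def by (simp add: length_jump_aux)

locale cyclic_start =
  fixes x :: "enat list" and j0 :: nat
  assumes j0n: "j0 < length x"
begin

abbreviation "n \<equiv> length x"
abbreviation "ofs q \<equiv> cdist (length x) j0 q"

lemma mod_n_less: "(a::nat) mod n < n"
  using j0n by (intro mod_less_divisor) linarith

definition "dominates_prefix a \<longleftrightarrow> (\<forall>r<n. ofs r \<le> ofs a \<longrightarrow> x!r \<noteq> \<infinity> \<longrightarrow> x!r \<le> x!a)"

definition "jump_cands a = {d. 0 < d \<and> d < n \<and> x ! ((a + d) mod n) \<noteq> \<infinity> \<and> x ! a < x ! ((a + d) mod n)}"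

definition "closed_upto a y \<longleftrightarrow> length y = n \<and> (\<forall>q<n. y!q = (if ofs q \<le> ofs a then jump_val x j0 q else x!q))"

lemma next_jump_cands:
  "next_jump x a = (if jump_cands a = {} then None else Some ((a + Min (jump_cands a)) mod n))"
  unfolding next_jump_def jump_cands_def Let_def by simp

lemma ofs_add_mod_eq: assumes "ofs a \<le> ofs r" shows "ofs ((a + (ofs r - ofs a)) mod n) = ofs r"
  using assms cdist_add_mod[OF j0n, of a "ofs r - ofs a"] cdist_less[OF j0n, of r] by simp

text \<open>A candidate wrapping around past \<open>j0\<close> would be a larger entry before \<open>a\<close>.\<close>
lemma jump_cand_no_wrap:
  assumes "a < n" "dominates_prefix a" "d \<in> jump_cands a"
  shows "ofs ((a + d) mod n) = ofs a + d"
proof -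
  have d: "d < n" "x ! ((a + d) mod n) \<noteq> \<infinity>" "x ! a < x ! ((a + d) mod n)"
    using assms(3) unfolding jump_cands_def by auto
  have e: "ofs ((a + d) mod n) = (ofs a + d) mod n" by (rule cdist_add_mod[OF j0n])
  have oa: "ofs a < n" by (rule cdist_less[OF j0n])
  show ?thesis
  proof (rule ccontr)
    assume "ofs ((a + d) mod n) \<noteq> ofs a + d"
    hence "\<not> ofs a + d < n" using e by auto
    hence "ofs ((a + d) mod n) = ofs a + d - n" using e d(1) oa by (simp add: le_mod_geq less_diff_conv2 mod_if)
    hence "ofs ((a + d) mod n) \<le> ofs a" using d(1) by simp
    hence "x ! ((a + d) mod n) \<le> x ! a" using assms(2) d(2) mod_n_less unfolding dominates_prefix_def by blast
    thus False using d(3) by simp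
  qed
qed

lemma next_jump_Some:
  assumes "a < n" "dominates_prefix a" "r0 < n" "ofs a < ofs r0" "x!r0 \<noteq> \<infinity>" "x!a < x!r0"
  obtains b where "next_jump x a = Some b" "b < n" "ofs a < ofs b" "x!b \<noteq> \<infinity>" "x!a < x!b"
    "\<forall>r<n. ofs a < ofs r \<and> ofs r < ofs b \<longrightarrow> \<not> (x!r \<noteq> \<infinity> \<and> x!a < x!r)"
proof -
  have cand: "ofs r - ofs a \<in> jump_cands a" if "r < n" "ofs a < ofs r" "x!r \<noteq> \<infinity>" "x!a < x!r" for r
  proof -
    have "(a + (ofs r - ofs a)) mod n = r"
      using cdist_inj[OF j0n mod_n_less that(1)] ofs_add_mod_eq that(2) by simp
    thus ?thesis using that cdist_less[OF j0n, of r] unfolding jump_cands_def by auto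
  qed
  have ne: "jump_cands a \<noteq> {}" using cand[OF assms(3-6)] by auto
  have fin: "finite (jump_cands a)" unfolding jump_cands_def by auto
  define dm where "dm = Min (jump_cands a)"
  have dmD: "dm \<in> jump_cands a" unfolding dm_def using Min_in[OF fin ne] .
  define b where "b = (a + dm) mod n"
  have ob: "ofs b = ofs a + dm" unfolding b_def by (rule jump_cand_no_wrap[OF assms(1,2) dmD])
  show ?thesis
  proof (rule that)
    show "next_jump x a = Some b" using ne unfolding next_jump_cands b_def dm_def by simp
    show "b < n" unfolding b_def by (rule mod_n_less)
    show "ofs a < ofs b" "x!b \<noteq> \<infinity>" "x!a < x!b" using dmD ob unfolding jump_cands_def b_def by auto
    show "\<forall>r<n. ofs a < ofs r \<and> ofs r < ofs b \<longrightarrow> \<not> (x!r \<noteq> \<infinity> \<and> x!a < x!r)"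
      using cand Min_le[OF fin] ob unfolding dm_def by fastforce
  qed
qed

lemma next_jump_None:
  assumes "a < n" "dominates_prefix a" "\<not> (\<exists>r<n. ofs a < ofs r \<and> x!r \<noteq> \<infinity> \<and> x!a < x!r)"
  shows "next_jump x a = None"
proof -
  have "jump_cands a = {}"
  proof (rule ccontr)
    assume "jump_cands a \<noteq> {}"
    then obtain d where d: "d \<in> jump_cands a" by auto
    hence "0 < d" "x ! ((a + d) mod n) \<noteq> \<infinity>" "x ! a < x ! ((a + d) mod n)"
      unfolding jump_cands_def by auto
    moreover have "ofs a < ofs ((a + d) mod n)" using jump_cand_no_wrap[OF assms(1,2) d] \<open>0 < d\<close> by simp
    ultimately show False using assms(3) mod_n_less by blast
  qed
  thus ?thesis unfolding next_jump_cands by simp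
qed

lemma closed_upto_final:
  assumes "a < n" "x!a \<noteq> \<infinity>" "dominates_prefix a" "\<not> (\<exists>r<n. ofs a < ofs r \<and> x!r \<noteq> \<infinity> \<and> x!a < x!r)" "closed_upto a y"
  shows "y = map (jump_val x j0) [0..<n]"
proof (rule nth_equalityI)
  show "length y = length (map (jump_val x j0) [0..<n])" using assms(5) by (simp add: closed_upto_def)
  fix q assume "q < length y"
  hence q: "q < n" using assms(5) by (simp add: closed_upto_def)
  have "jump_val x j0 q = x!q" if "ofs a < ofs q"
  proof -
    have "q \<noteq> j0" using that j0n by auto
    moreover have "x!a \<le> pre_max x j0 q" using pre_max_ge[of a x j0 q] assms(1,2) that by simp
    moreover have "x!q \<noteq> \<infinity> \<longrightarrow> x!q \<le> x!a" using assms(4) q that by (meson not_le)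
    ultimately show ?thesis unfolding jump_val_def by (auto dest: order.trans)
  qed
  thus "y ! q = map (jump_val x j0) [0..<n] ! q" using assms(5) q by (auto simp: closed_upto_def not_le)
qed

lemma closed_upto_next:
  assumes a: "a < n" "dominates_prefix a" "closed_upto a y"
    and b: "b < n" "ofs a < ofs b" "x!b \<noteq> \<infinity>" "x!a < x!b"
      "\<forall>r<n. ofs a < ofs r \<and> ofs r < ofs b \<longrightarrow> \<not> (x!r \<noteq> \<infinity> \<and> x!a < x!r)"
  shows "dominates_prefix b" "closed_upto b (y[b := x!a])"
proof -
  have below_b: "x!r \<le> x!a" if "r < n" "ofs r < ofs b" "x!r \<noteq> \<infinity>" for r
    using a(2) b(5) that unfolding dominates_prefix_def by (meson not_le)
  show "dominates_prefix b" unfolding dominates_prefix_def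
  proof (intro allI impI)
    fix r assume r: "r < n" "ofs r \<le> ofs b" "x!r \<noteq> \<infinity>"
    show "x!r \<le> x!b"
    proof (cases "ofs r = ofs b")
      case True thus ?thesis using cdist_inj[OF j0n r(1) b(1)] by simp
    next
      case False thus ?thesis using below_b[of r] r b(4) by simp
    qed
  qed
  have pre_max_a: "pre_max x j0 q = x!a" if "q < n" "ofs a < ofs q" "ofs q \<le> ofs b" for q
  proof (rule pre_max_eqI)
    show "x!a \<noteq> \<infinity>" using b(4) by (cases "x!a") auto
  qed (use that a(1) below_b in auto)
  have "(y[b := x!a])!q = (if ofs q \<le> ofs b then jump_val x j0 q else x!q)" if q: "q < n" for q
  proof (cases "q = b")
    case True
    have "b \<noteq> j0" using b(2) j0n by auto
    thus ?thesis using True pre_max_a[of b] b a(3) unfolding jump_val_def closed_upto_def by auto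
  next
    case False
    have "ofs q \<noteq> ofs b" using False cdist_inj[OF j0n q b(1)] by auto
    moreover have "jump_val x j0 q = x!q" if "ofs a < ofs q" "ofs q < ofs b"
      using that pre_max_a[OF q] b(5) q j0n unfolding jump_val_def by auto
    ultimately show ?thesis using a(3) q False b(2) unfolding closed_upto_def by (auto simp: not_le)
  qed
  thus "closed_upto b (y[b := x!a])" using a(3) by (simp add: closed_upto_def)
qed

lemma jump_aux_closed_form:
  "a < n \<Longrightarrow> x!a \<noteq> \<infinity> \<Longrightarrow> dominates_prefix a \<Longrightarrow> closed_upto a y \<Longrightarrow> n \<le> f + 1 + ofs a \<Longrightarrow>
    jump_aux x a f y = map (jump_val x j0) [0..<n]"
proof (induction f arbitrary: a y)
  case 0
  have "\<not> (\<exists>r<n. ofs a < ofs r \<and> x!r \<noteq> \<infinity> \<and> x!a < x!r)"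
    using 0 cdist_less[OF j0n] by (metis add_0 leD less_Suc_eq_le order.strict_trans2 plus_1_eq_Suc)
  thus ?case using closed_upto_final 0 by simp
next
  case (Suc f)
  show ?case
  proof (cases "\<exists>r<n. ofs a < ofs r \<and> x!r \<noteq> \<infinity> \<and> x!a < x!r")
    case False
    thus ?thesis using next_jump_None closed_upto_final Suc.prems by simp
  next
    case True
    then obtain r0 where "r0 < n" "ofs a < ofs r0" "x!r0 \<noteq> \<infinity>" "x!a < x!r0" by auto
    with next_jump_Some[OF Suc.prems(1,3)] obtain b where b: "next_jump x a = Some b" "b < n"
      "ofs a < ofs b" "x!b \<noteq> \<infinity>" "x!a < x!b"
      "\<forall>r<n. ofs a < ofs r \<and> ofs r < ofs b \<longrightarrow> \<not> (x!r \<noteq> \<infinity> \<and> x!a < x!r)" .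
    note step = closed_upto_next[OF Suc.prems(1,3,4) b(2-6)]
    have "jump_aux x b f (y[b := x!a]) = map (jump_val x j0) [0..<n]"
      using Suc.IH[OF b(2,4) step] Suc.prems(5) b(3) by simp
    thus ?thesis using b(1) by simp
  qed
qed

theorem jump_closed_form:
  assumes "x!j0 \<noteq> \<infinity>" shows "jump x j0 = map (jump_val x j0) [0..<n]"
proof -
  have "dominates_prefix j0" unfolding dominates_prefix_def using cdist_eq_0_iff[OF j0n] j0n by auto
  moreover have "closed_upto j0 (x[j0 := \<infinity>])"
    using cdist_eq_0_iff[OF j0n] j0n by (auto simp: closed_upto_def jump_val_def)
  ultimately show ?thesis unfolding jump_def using jump_aux_closed_form[OF j0n assms] by simp
qed

lemma jump_nth: "x!j0 \<noteq> \<infinity> \<Longrightarrow> q < n \<Longrightarrow> jump x j0 ! q = jump_val x j0 q"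
  using jump_closed_form by simp

lemma jump_update_before:
  assumes "x!j0 \<noteq> \<infinity>" "q0 < n" "q < n" "ofs q < ofs q0"
  shows "jump (x[q0 := e]) j0 ! q = jump x j0 ! q"
proof -
  interpret y: cyclic_start "x[q0 := e]" j0 using j0n by unfold_locales simp
  have "q0 \<noteq> j0" using assms(4) j0n by auto
  hence "jump (x[q0 := e]) j0 ! q = jump_val (x[q0 := e]) j0 q"
    using y.jump_nth assms(1,3) by simp
  also have "\<dots> = jump_val x j0 q"
    by (rule jump_val_cong) (use assms in \<open>auto simp: nth_list_update\<close>)
  finally show ?thesis using jump_nth assms(1,3) by simp
qed

end

section \<open>Jumps of words with two levels\<close>

text \<open>The configuration of a queue while the particle of size \<open>s\<close> enters: sites holding
  particles of size at most \<open>s\<close>, free terminal sites marked by \<open>hi\<close>, and \<open>\<infinity>\<close> elsewhere.\<close>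
locale two_level = cyclic_start +
  fixes s hi :: nat
  assumes j0_finite: "x!j0 \<noteq> \<infinity>"
    and two_levels: "\<And>q. q < n \<Longrightarrow> x!q \<noteq> \<infinity> \<Longrightarrow> x!q \<le> enat s \<or> x!q = enat hi"
    and s_less_hi: "s < hi"
begin

definition "tops = {q. q < n \<and> x!q = enat hi}"

lemma le_hi: "q < n \<Longrightarrow> x!q \<noteq> \<infinity> \<Longrightarrow> x!q \<le> enat hi"
  using two_levels[of q] s_less_hi by (auto intro: order.trans)

lemma pre_max_after_top: assumes "r \<in> tops" "ofs r < ofs q" shows "pre_max x j0 q = enat hi"
proof -
  have "pre_max x j0 q = x!r" by (rule pre_max_eqI) (use assms le_hi in \<open>auto simp: tops_def\<close>)
  thus ?thesis using assms by (simp add: tops_def)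
qed

lemma pre_max_le_low:
  assumes "\<And>r. r \<in> tops \<Longrightarrow> ofs q \<le> ofs r" "q < n" "q \<noteq> j0"
  shows "pre_max x j0 q \<le> enat s"
proof (rule pre_max_le[of x j0 q _ j0])
  fix r assume r: "r < n" "ofs r < ofs q" "x!r \<noteq> \<infinity>"
  have "r \<notin> tops" using assms(1) r by fastforce
  thus "x!r \<le> enat s" using two_levels r by (auto simp: tops_def)
qed (use j0n j0_finite cdist_eq_0_iff[OF j0n assms(2)] assms in auto)

lemma jump_after_top:
  assumes "r \<in> tops" "ofs r < ofs q" "q < n"
  shows "jump x j0 ! q = x!q"
proof -
  have "q \<noteq> j0" using assms(2) j0n by auto
  moreover have "x!q \<noteq> \<infinity> \<Longrightarrow> x!q \<le> enat hi" using le_hi assms(3) by blast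
  ultimately show ?thesis using jump_nth[OF j0_finite assms(3)] pre_max_after_top[OF assms(1,2)]
    by (auto simp: jump_val_def not_less)
qed

lemma jump_before_tops:
  assumes "q < n" "\<And>r. r \<in> tops \<Longrightarrow> ofs q \<le> ofs r"
  shows "jump x j0 ! q \<noteq> enat hi"
proof (cases "q = j0")
  case False
  have "pre_max x j0 q < enat hi"
    using pre_max_le_low[OF assms(2,1) False] s_less_hi by (auto intro: order.strict_trans1)
  thus ?thesis using jump_nth[OF j0_finite assms(1)] False by (auto simp: jump_val_def)
qed (use jump_nth[OF j0_finite assms(1)] in \<open>simp add: jump_val_def\<close>)

lemma jump_no_hi: "tops = {} \<Longrightarrow> q < n \<Longrightarrow> jump x j0 ! q \<noteq> enat hi"
  using jump_before_tops by simp

lemma jump_hi_iff: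
  assumes h: "h \<in> tops" "\<And>q. q \<in> tops \<Longrightarrow> ofs h \<le> ofs q" and q: "q < n"
  shows "jump x j0 ! q = enat hi \<longleftrightarrow> q \<in> tops \<and> q \<noteq> h"
proof (cases "ofs h < ofs q")
  case True
  thus ?thesis using jump_after_top[OF h(1) True q] q by (auto simp: tops_def)
next
  case False
  have hn: "h < n" using h(1) by (simp add: tops_def)
  have "jump x j0 ! q \<noteq> enat hi" using jump_before_tops[OF q] h(2) False by force
  moreover have "q \<in> tops \<Longrightarrow> q = h" using h(2)[of q] False cdist_inj[OF j0n hn q] by fastforce
  ultimately show ?thesis by auto
qed

lemma two_level_update: assumes "q0 < n" shows "two_level (x[q0 := enat s]) j0 s hi"
proof
  show "j0 < length (x[q0 := enat s])" using j0n by simp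
  show "x[q0 := enat s] ! j0 \<noteq> \<infinity>" using j0_finite assms by (cases "q0 = j0") auto
  fix q assume "q < length (x[q0 := enat s])" "x[q0 := enat s] ! q \<noteq> \<infinity>"
  thus "x[q0 := enat s] ! q \<le> enat s \<or> x[q0 := enat s] ! q = enat hi"
    using two_levels[of q] assms by (cases "q = q0") auto
qed (rule s_less_hi)

lemma tops_update: "q0 < n \<Longrightarrow> two_level.tops (x[q0 := enat s]) hi = tops - {q0}"
  using s_less_hi by (auto simp: two_level.tops_def[OF two_level_update] tops_def nth_list_update)

lemma jump_update_later_top:
  assumes h: "h \<in> tops" "\<And>q. q \<in> tops \<Longrightarrow> ofs h \<le> ofs q" and qA: "qA \<in> tops" "qA \<noteq> h"
  shows "jump (x[qA := enat s]) j0 = (jump x j0)[qA := enat s]"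
proof (rule nth_equalityI)
  have hn: "h < n" and qAn: "qA < n" using h qA by (auto simp: tops_def)
  interpret y: two_level "x[qA := enat s]" j0 s hi by (rule two_level_update[OF qAn])
  have lt: "ofs h < ofs qA" using h(2)[OF qA(1)] cdist_inj[OF j0n hn qAn] qA(2) by fastforce
  fix q assume "q < length (jump (x[qA := enat s]) j0)"
  hence q: "q < n" by simp
  show "jump (x[qA := enat s]) j0 ! q = (jump x j0)[qA := enat s] ! q"
  proof (cases "ofs h < ofs q")
    case True
    have "h \<in> y.tops" using h(1) qA(2) tops_update[OF qAn] by simp
    thus ?thesis using y.jump_after_top[of h q] jump_after_top[OF h(1) True q] True q qAn
      by (cases "q = qA") auto
  next
    case False
    hence "q \<noteq> qA" using lt by auto
    thus ?thesis using jump_update_before[OF j0_finite qAn q] lt False by simp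
  qed
qed simp

lemma jump_update_first_top_at:
  assumes h: "h \<in> tops" "\<And>q. q \<in> tops \<Longrightarrow> ofs h \<le> ofs q"
  shows "jump (x[h := enat s]) j0 ! h = jump x j0 ! h"
proof -
  have hn: "h < n" using h by (simp add: tops_def)
  interpret y: two_level "x[h := enat s]" j0 s hi by (rule two_level_update[OF hn])
  show ?thesis
  proof (cases "h = j0")
    case False
    have pm_y: "pre_max (x[h := enat s]) j0 h = pre_max x j0 h"
      by (rule pre_max_cong) (auto intro!: nth_list_update_neq)
    have pm_s: "pre_max x j0 h \<le> enat s" by (rule pre_max_le_low[OF h(2) hn False])
    have "jump_val (x[h := enat s]) j0 h = pre_max x j0 h"
      unfolding jump_val_def using False hn pm_y pm_s by (auto simp: not_less intro: antisym)
    moreover have "pre_max x j0 h < enat hi" using order.strict_trans1[OF pm_s, of "enat hi"] s_less_hi by simp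
    hence "jump_val x j0 h = pre_max x j0 h"
      using h(1) False unfolding jump_val_def tops_def by auto
    ultimately show ?thesis using jump_nth[OF j0_finite hn] y.jump_nth[OF y.j0_finite] hn by simp
  qed (use jump_nth[OF j0_finite hn] y.jump_nth[OF y.j0_finite] hn in \<open>simp add: jump_val_def\<close>)
qed

lemma jump_update_first_top_after:
  assumes "h \<in> tops" "q < n" "ofs h < ofs q" "\<forall>r\<in>tops - {h}. \<not> ofs r < ofs q"
  shows "jump (x[h := enat s]) j0 ! q = (if q \<in> tops then enat s else jump x j0 ! q)"
proof -
  have hn: "h < n" using assms(1) by (simp add: tops_def)
  interpret y: two_level "x[h := enat s]" j0 s hi by (rule two_level_update[OF hn])
  have qh: "q \<noteq> h" "q \<noteq> j0" using assms(3) j0n by auto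
  have "pre_max (x[h := enat s]) j0 q = x[h := enat s] ! h"
  proof (rule pre_max_eqI)
    fix r assume r: "r < length (x[h := enat s])" "cdist (length (x[h := enat s])) j0 r < cdist (length (x[h := enat s])) j0 q"
      "x[h := enat s] ! r \<noteq> \<infinity>"
    have "r \<noteq> h \<Longrightarrow> r \<notin> tops" using assms(4) r by auto
    thus "x[h := enat s] ! r \<le> x[h := enat s] ! h"
      using two_levels[of r] r hn by (cases "r = h") (auto simp: tops_def)
  qed (use hn assms(3) in auto)
  hence "pre_max (x[h := enat s]) j0 q = enat s" using hn by simp
  hence "jump (x[h := enat s]) j0 ! q = (if x!q \<noteq> \<infinity> \<and> enat s < x!q then enat s else x!q)"
    using y.jump_nth[OF y.j0_finite, of q] assms(2) qh by (simp add: jump_val_def)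
  moreover have "x!q \<noteq> \<infinity> \<and> enat s < x!q \<longleftrightarrow> q \<in> tops"
    using two_levels[OF assms(2)] s_less_hi assms(2) by (auto simp: tops_def dest: leD)
  ultimately show ?thesis using jump_after_top[OF assms(1,3,2)] by auto
qed

lemma jump_update_first_top:
  assumes h: "h \<in> tops" "\<And>q. q \<in> tops \<Longrightarrow> ofs h \<le> ofs q"
    and h': "tops = {h} \<or> (h' \<in> tops \<and> h' \<noteq> h \<and> (\<forall>q\<in>tops - {h}. ofs h' \<le> ofs q))"
  shows "jump (x[h := enat s]) j0 = (if tops = {h} then jump x j0 else (jump x j0)[h' := enat s])"
proof (rule nth_equalityI)
  have hn: "h < n" using h by (simp add: tops_def)
  interpret y: two_level "x[h := enat s]" j0 s hi by (rule two_level_update[OF hn])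
  define G where "G = (tops \<noteq> {h})"
  have h'G: "h' \<in> tops" "h' < n" "h' \<noteq> h" "ofs h < ofs h'" if G
    using that h' h(2)[of h'] cdist_inj[OF j0n hn, of h'] unfolding G_def by (auto simp: tops_def)
  have R: "(if tops = {h} then jump x j0 else (jump x j0)[h' := enat s]) ! q =
      (if G \<and> q = h' then enat s else jump x j0 ! q)" if "q < n" for q
    using that h'G(2) by (auto simp: G_def)
  fix q assume "q < length (jump (x[h := enat s]) j0)"
  hence q: "q < n" by simp
  consider "ofs q < ofs h" | "q = h" | "ofs h < ofs q"
    using cdist_inj[OF j0n q hn] by (meson linorder_neqE_nat)
  thus "jump (x[h := enat s]) j0 ! q = (if tops = {h} then jump x j0 else (jump x j0)[h' := enat s]) ! q"
  proof cases
    case 1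
    thus ?thesis unfolding R[OF q] using jump_update_before[OF j0_finite hn q] h'G(4) by auto
  next
    case 2
    thus ?thesis unfolding R[OF q] using jump_update_first_top_at[OF h] h'G(3) by auto
  next
    case 3
    hence qh: "q \<noteq> h" by auto
    show ?thesis
    proof (cases "\<exists>r\<in>tops - {h}. ofs r < ofs q")
      case True
      then obtain r where r: "r \<in> tops - {h}" "ofs r < ofs q" by blast
      have "r \<in> y.tops" using r tops_update[OF hn] by simp
      moreover have "\<not> (G \<and> q = h')"
      proof
        assume Gq: "G \<and> q = h'"
        hence "ofs h' \<le> ofs r" using h' r(1) unfolding G_def by auto
        thus False using r(2) Gq by simp
      qed
      ultimately show ?thesis unfolding R[OF q]
        using y.jump_after_top[of r q] jump_after_top[OF _ r(2) q] r q qh by auto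
    next
      case False
      have second: "q \<in> tops \<longleftrightarrow> G \<and> q = h'"
      proof
        assume qt: "q \<in> tops"
        hence G: G using qh unfolding G_def by auto
        hence "h' \<in> tops - {h}" "\<forall>r\<in>tops - {h}. ofs h' \<le> ofs r" using h' unfolding G_def by auto
        hence "ofs h' \<le> ofs q" "\<not> ofs h' < ofs q" using qt qh False by auto
        hence "ofs h' = ofs q" by simp
        thus "G \<and> q = h'" using G cdist_inj[OF j0n q h'G(2)[OF G]] by simp
      qed (use h'G in blast)
      have "jump (x[h := enat s]) j0 ! q = (if q \<in> tops then enat s else jump x j0 ! q)"
        by (rule jump_update_first_top_after[OF h(1) q 3]) (use False in blast)
      thus ?thesis unfolding R[OF q] second .
    qed
  qed
qed simp

end

section \<open>Jumps of words with a maximal particle\<close>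

context cyclic_start
begin

lemma pre_max_attained:
  assumes "x!j0 \<noteq> \<infinity>" "q < n" "q \<noteq> j0"
  obtains r where "r < n" "ofs r < ofs q" "x!r \<noteq> \<infinity>" "pre_max x j0 q = x!r"
proof -
  let ?S = "{x!r | r. r < length x \<and> ofs r < ofs q \<and> x!r \<noteq> \<infinity>}"
  have "ofs j0 < ofs q" using cdist_eq_0_iff[OF j0n assms(2)] assms(3) j0n by simp
  hence "x!j0 \<in> ?S" using j0n assms(1) by blast
  hence "pre_max x j0 q \<in> ?S" unfolding pre_max_def by (intro Max_in[OF finite_nth_set]) blast
  then obtain r where "r < n" "ofs r < ofs q" "x!r \<noteq> \<infinity>" "pre_max x j0 q = x!r" by blast
  thus ?thesis by (rule that)
qed

lemma jump_of_max_start: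
  assumes "x!j0 \<noteq> \<infinity>" "\<And>q. q < n \<Longrightarrow> x!q \<noteq> \<infinity> \<Longrightarrow> x!q \<le> x!j0"
  shows "jump x j0 = x[j0 := \<infinity>]"
proof (rule nth_equalityI)
  fix q assume "q < length (jump x j0)"
  hence q: "q < n" by simp
  show "jump x j0 ! q = x[j0 := \<infinity>] ! q"
  proof (cases "q = j0")
    case False
    have "ofs j0 < ofs q" using cdist_eq_0_iff[OF j0n q] False j0n by simp
    hence "x!j0 \<le> pre_max x j0 q" using pre_max_ge[of j0 x j0 q] j0n assms(1) by simp
    hence "jump_val x j0 q = x!q" unfolding jump_val_def using False assms(2)[OF q]
      by (auto dest: order.trans simp: not_less)
    thus ?thesis using jump_nth[OF assms(1) q] False by simp
  qed (use jump_nth[OF assms(1)] j0n in \<open>simp add: jump_val_def\<close>)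
qed simp

lemma jump_nth_cases:
  assumes "x!j0 \<noteq> \<infinity>" "a < n" "x!a \<noteq> \<infinity>"
  shows "jump x j0 ! a = x!a \<or> x!j0 \<le> x!a"
proof (cases "a = j0")
  case False
  have pm: "x!j0 \<le> pre_max x j0 a"
    using pre_max_ge[of j0 x j0 a] j0n assms False cdist_eq_0_iff[OF j0n assms(2)] by simp
  show ?thesis
  proof (cases "pre_max x j0 a < x!a")
    case True thus ?thesis using order.trans[OF pm less_imp_le[OF True]] by simp
  next
    case F: False
    thus ?thesis using jump_nth[OF assms(1,2)] False by (simp add: jump_val_def)
  qed
qed simp

context
  fixes K :: enat
  assumes j0_finite: "x!j0 \<noteq> \<infinity>" and K_finite: "K \<noteq> \<infinity>"
    and bounded: "\<And>q. q < n \<Longrightarrow> x!q \<noteq> \<infinity> \<Longrightarrow> x!q \<le> K"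
begin

lemma jump_nth_eq_bound: "q < n \<Longrightarrow> jump x j0 ! q = K \<Longrightarrow> x!q = K"
  using jump_nth[OF j0_finite, of q] bounded[of q] K_finite
  by (auto simp: jump_val_def split: if_splits dest: leD)

lemma jump_nth_after_bound:
  assumes "r < n" "x!r = K" "ofs r < ofs q" "q < n"
  shows "jump x j0 ! q = x!q"
proof -
  have "K \<le> pre_max x j0 q" using pre_max_ge[of r x j0 q] assms K_finite by simp
  moreover have "q \<noteq> j0" using assms(3) j0n by auto
  ultimately show ?thesis using jump_nth[OF j0_finite assms(4)] bounded[OF assms(4)]
    by (auto simp: jump_val_def dest: order.trans leD)
qed

lemma jump_first_bound_site:
  assumes "r < n" "x!r = K" "\<And>q. q < n \<Longrightarrow> x!q = K \<Longrightarrow> ofs r \<le> ofs q"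
  shows "jump x j0 ! r \<noteq> K"
proof (cases "r = j0")
  case False
  obtain r' where r': "r' < n" "ofs r' < ofs r" "x!r' \<noteq> \<infinity>" "pre_max x j0 r = x!r'"
    using pre_max_attained[OF j0_finite assms(1) False] .
  have "x!r' \<noteq> K" using assms(3)[OF r'(1)] r'(2) by fastforce
  hence "pre_max x j0 r < K" using bounded[OF r'(1,3)] r'(4) by simp
  thus ?thesis using jump_nth[OF j0_finite assms(1)] False assms(2) K_finite by (simp add: jump_val_def)
qed (use jump_nth[OF j0_finite] assms K_finite in \<open>auto simp: jump_val_def\<close>)

text \<open>The jump lowers exactly the first entry of maximal size.\<close>
lemma card_jump_bound_sites:
  assumes "r < n" "x!r = K"
  shows "card {q. q < n \<and> x!q = K} = Suc (card {q. q < n \<and> jump x j0 ! q = K})"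
proof -
  define A' where "A' = {q. q < n \<and> x!q = K}"
  define A where "A = {q. q < n \<and> jump x j0 ! q = K}"
  have fin: "finite A'" unfolding A'_def by auto
  obtain qs where qs: "qs \<in> A'" "\<forall>q\<in>A'. ofs qs \<le> ofs q"
    using finite_argmin[OF fin, of ofs] assms unfolding A'_def by blast
  have qsn: "qs < n" "x!qs = K" using qs(1) unfolding A'_def by auto
  have "qs \<notin> A" using jump_first_bound_site[OF qsn] qs(2) unfolding A_def A'_def by auto
  moreover have "A' = insert qs A"
  proof (intro equalityI subsetI)
    fix q assume q: "q \<in> A'"
    show "q \<in> insert qs A"
    proof (cases "q = qs")
      case False
      hence "ofs qs < ofs q" using qs(2) q cdist_inj[OF j0n qsn(1), of q] unfolding A'_def by force
      thus ?thesis using jump_nth_after_bound[OF qsn] q unfolding A_def A'_def by simp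
    qed simp
  qed (use qs(1) jump_nth_eq_bound in \<open>auto simp: A_def A'_def\<close>)
  moreover have "finite A" unfolding A_def by auto
  ultimately show ?thesis unfolding A'_def[symmetric] A_def[symmetric] by simp
qed

lemma jump_start_lands:
  assumes "j < n" "x!j = K" "jump x j0 ! j = K"
  shows "\<exists>q. 0 < ofs q \<and> ofs q \<le> ofs j \<and> q < n \<and> jump x j0 ! q = x!j0"
proof (cases "x!j0 < x!j")
  case True
  define S where "S = {r. r < n \<and> 0 < ofs r \<and> x!r \<noteq> \<infinity> \<and> x!j0 < x!r}"
  have "j \<noteq> j0" using True by auto
  hence "0 < ofs j" using cdist_eq_0_iff[OF j0n assms(1)] by simp
  hence "j \<in> S" "finite S" using True assms K_finite unfolding S_def by auto
  then obtain q where q: "q \<in> S" "\<forall>r\<in>S. ofs q \<le> ofs r" using finite_argmin[of S ofs] by blast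
  have qn: "q < n" "0 < ofs q" "x!q \<noteq> \<infinity>" "x!j0 < x!q" using q(1) unfolding S_def by auto
  have "pre_max x j0 q = x!j0"
  proof (rule pre_max_eqI)
    fix r assume r: "r < length x" "ofs r < ofs q" "x!r \<noteq> \<infinity>"
    have "r \<notin> S" using q(2) r(2) by fastforce
    thus "x!r \<le> x!j0" using r j0n cdist_eq_0_iff[OF j0n, of r] unfolding S_def
      by (cases "r = j0") (auto simp: not_less)
  qed (use j0n qn j0_finite in auto)
  hence "jump x j0 ! q = x!j0" using jump_nth[OF j0_finite qn(1)] qn by (auto simp: jump_val_def)
  thus ?thesis using qn q(2) \<open>j \<in> S\<close> by blast
next
  case False
  hence "x!j0 = K" using bounded[OF j0n j0_finite] assms(2) by simp
  moreover have "j \<noteq> j0" using assms(3) jump_nth[OF j0_finite] j0n K_finite by (auto simp: jump_val_def)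
  ultimately show ?thesis using assms cdist_eq_0_iff[OF j0n assms(1)] by auto
qed

end

end

lemma pre_max_append_small:
  fixes a b :: "enat list"
  assumes j: "j0 < length a" and fin: "a!j0 \<noteq> \<infinity>" and small: "\<And>e. e \<in> set b \<Longrightarrow> e \<noteq> \<infinity> \<Longrightarrow> e \<le> a!j0"
    and q: "q < length a" "q \<noteq> j0"
  shows "pre_max (a @ b) j0 q = pre_max a j0 q"
proof -
  interpret A: cyclic_start a j0 by unfold_locales (rule j)
  let ?N = "length (a @ b)"
  have restrict: "cdist ?N j0 r < cdist ?N j0 q \<longleftrightarrow> A.ofs r < A.ofs q" if "r < length a" for r
    using cdist_less_iff_restrict[OF j _ that q(1), of ?N] by simp
  obtain r where r: "r < length a" "A.ofs r < A.ofs q" "a!r \<noteq> \<infinity>" "pre_max a j0 q = a!r"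
    using A.pre_max_attained[OF fin q] .
  have "A.ofs j0 < A.ofs q" using cdist_eq_0_iff[OF j q(1)] q(2) j by simp
  hence j0_le: "a!j0 \<le> a!r" using pre_max_ge[of j0 a j0 q] j fin r(4) by simp
  have "pre_max (a @ b) j0 q = (a @ b) ! r"
  proof (rule pre_max_eqI)
    show "r < ?N" "(a @ b) ! r \<noteq> \<infinity>" using r(1,3) by (simp_all add: nth_append)
    show "cdist ?N j0 r < cdist ?N j0 q" using restrict[OF r(1)] r(2) by simp
    fix r' assume r': "r' < ?N" "cdist ?N j0 r' < cdist ?N j0 q" "(a @ b) ! r' \<noteq> \<infinity>"
    show "(a @ b) ! r' \<le> (a @ b) ! r"
    proof (cases "r' < length a")
      case True
      hence "a!r' \<le> pre_max a j0 q" using pre_max_ge[of r' a j0 q] r' restrict[OF True] by (simp add: nth_append)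
      thus ?thesis using True r(1,4) by (simp add: nth_append)
    next
      case False
      hence "(a @ b) ! r' \<in> set b" using r'(1) by (simp add: nth_append)
      hence "(a @ b) ! r' \<le> a!j0" using small r'(3) by blast
      thus ?thesis using j0_le r(1) by (simp add: nth_append)
    qed
  qed
  thus ?thesis using r by (simp add: nth_append)
qed

lemma jump_append_small:
  fixes a b :: "enat list"
  assumes j: "j0 < length a" and fin: "a!j0 \<noteq> \<infinity>" and small: "\<And>e. e \<in> set b \<Longrightarrow> e \<noteq> \<infinity> \<Longrightarrow> e \<le> a!j0"
  shows "jump (a @ b) j0 = jump a j0 @ b"
proof (rule nth_equalityI)
  interpret X: cyclic_start "a @ b" j0 by unfold_locales (use j in simp)
  interpret A: cyclic_start a j0 by unfold_locales (rule j)
  have fin': "(a @ b) ! j0 \<noteq> \<infinity>" using fin j by (simp add: nth_append)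
  fix q assume "q < length (jump (a @ b) j0)"
  hence q: "q < length (a @ b)" by simp
  show "jump (a @ b) j0 ! q = (jump a j0 @ b) ! q"
  proof (cases "q < length a")
    case True
    have "jump_val (a @ b) j0 q = jump_val a j0 q"
      using pre_max_append_small[OF j fin small True] True by (auto simp: jump_val_def nth_append)
    thus ?thesis using X.jump_nth[OF fin' q] A.jump_nth[OF fin True] True by (simp add: nth_append)
  next
    case False
    have qj: "q \<noteq> j0" using False j by auto
    have "(a @ b) ! j0 \<le> pre_max (a @ b) j0 q"
      using pre_max_ge[of j0 "a @ b" j0 q] fin' j q qj cdist_eq_0_iff[of j0 "length (a @ b)" q] by simp
    moreover have "(a @ b) ! q \<in> set b" using False q by (simp add: nth_append)
    ultimately have "jump_val (a @ b) j0 q = (a @ b) ! q"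
      using small[of "(a @ b) ! q"] j qj unfolding jump_val_def by (auto simp: nth_append dest: order.trans leD)
    thus ?thesis using X.jump_nth[OF fin' q] False by (simp add: nth_append)
  qed
qed simp

lemma count_list_card: "count_list xs y = card {q. q < length xs \<and> xs!q = y}"
  unfolding count_list_eq_length_filter length_filter_conv_card by (rule arg_cong[where f=card]) auto

lemma maxsize_eq:
  assumes "\<And>e. e \<in> set w \<Longrightarrow> e \<noteq> \<infinity> \<Longrightarrow> e \<le> enat M" "enat M \<in> set w"
  shows "maxsize w = M"
  unfolding maxsize_def
proof (rule Max_eqI)
  show "finite (insert 0 {the_enat x |x. x \<in> set w \<and> x \<noteq> \<infinity>})"
    using finite_subset[of _ "the_enat ` set w"] by auto
  show "M \<in> insert 0 {the_enat x |x. x \<in> set w \<and> x \<noteq> \<infinity>}" using assms(2) by force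
  fix y assume "y \<in> insert 0 {the_enat x |x. x \<in> set w \<and> x \<noteq> \<infinity>}"
  then consider "y = 0" | e where "y = the_enat e" "e \<in> set w" "e \<noteq> \<infinity>" by blast
  thus "y \<le> M"
  proof cases
    case 2 thus ?thesis using assms(1)[OF 2(2,3)] by (cases e) auto
  qed simp
qed

section \<open>Running a queue\<close>

definition free_sites :: "nat \<Rightarrow> nat set \<Rightarrow> (nat \<Rightarrow> nat option) \<Rightarrow> nat set" where
  "free_sites n T occ = {q. q < n \<and> q \<in> T \<and> occ q = None}"

lemma qstep_unfold: "qstep n T (s, j) (occ, fv) = (let D = {d. d < n \<and> (j + d) mod n \<in> T \<and> occ ((j + d) mod n) = None};
          V = (if D = {} then {..<n} else (\<lambda>e. (j + e) mod n) ` {..Min D});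
          fv' = (\<lambda>q. if q \<in> V \<and> fv q = None then Some s else fv q)
      in if D = {} then (occ, fv') else (occ((j + Min D) mod n := Some s), fv'))"
  unfolding qstep_def by (simp only: prod.case)

lemma qstep_full: assumes "j < n" "free_sites n T occ = {}"
  shows "qstep n T (s, j) (occ, fv) = (occ, \<lambda>q. if q < n \<and> fv q = None then Some s else fv q)"
proof -
  have D: "{d. d < n \<and> (j + d) mod n \<in> T \<and> occ ((j + d) mod n) = None} = {}"
    using assms by (auto simp: free_sites_def)
  show ?thesis unfolding qstep_unfold Let_def D by (simp only: simp_thms if_True lessThan_iff)
qed

lemma qstep_place: assumes "j < n" "free_sites n T occ \<noteq> {}"
  shows "\<exists>q\<in>free_sites n T occ. (\<forall>r\<in>free_sites n T occ. cdist n j q \<le> cdist n j r) \<and>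
     qstep n T (s, j) (occ, fv) = (occ(q := Some s), \<lambda>r. if r < n \<and> cdist n j r \<le> cdist n j q \<and> fv r = None then Some s else fv r)"
proof -
  define D where "D = {d. d < n \<and> (j + d) mod n \<in> T \<and> occ ((j + d) mod n) = None}"
  have np: "0 < n" using assms by simp
  obtain r0 where r0: "r0 \<in> free_sites n T occ" using assms by auto
  have inD: "\<And>r. r \<in> free_sites n T occ \<Longrightarrow> cdist n j r \<in> D"
  proof -
    fix r assume r: "r \<in> free_sites n T occ"
    hence rn: "r < n" by (simp add: free_sites_def)
    have "(j + cdist n j r) mod n = r" by (rule add_cdist_mod[OF assms(1) rn])
    thus "cdist n j r \<in> D" using r cdist_less[OF assms(1)] unfolding D_def free_sites_def by auto
  qed
  have ne: "D \<noteq> {}" using inD[OF r0] by auto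
  have fin: "finite D" unfolding D_def by auto
  define dm where "dm = Min D"
  have dmD: "dm \<in> D" unfolding dm_def by (rule Min_in[OF fin ne])
  define q where "q = (j + dm) mod n"
  have dmn: "dm < n" using dmD by (simp add: D_def)
  have oq: "cdist n j q = dm" unfolding q_def by (rule cdist_add_mod_self[OF assms(1) dmn])
  have qF: "q \<in> free_sites n T occ" using dmD np unfolding D_def free_sites_def q_def by auto
  have qmin: "\<forall>r\<in>free_sites n T occ. cdist n j q \<le> cdist n j r"
    using inD Min_le[OF fin] oq unfolding dm_def by auto
  have V: "(\<lambda>e. (j + e) mod n) ` {..dm} = {r. r < n \<and> cdist n j r \<le> dm}"
  proof (intro set_eqI iffI)
    fix r assume "r \<in> (\<lambda>e. (j + e) mod n) ` {..dm}"
    then obtain e where e: "e \<le> dm" "r = (j + e) mod n" by auto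
    have "cdist n j r = e" using e cdist_add_mod_self[OF assms(1), of e] dmn by simp
    thus "r \<in> {r. r < n \<and> cdist n j r \<le> dm}" using e np by simp
  next
    fix r assume r: "r \<in> {r. r < n \<and> cdist n j r \<le> dm}"
    hence "r = (j + cdist n j r) mod n" using add_cdist_mod[OF assms(1)] by simp
    thus "r \<in> (\<lambda>e. (j + e) mod n) ` {..dm}" using r by auto
  qed
  have st: "qstep n T (s, j) (occ, fv) = (occ(q := Some s), \<lambda>r. if r < n \<and> cdist n j r \<le> cdist n j q \<and> fv r = None then Some s else fv r)"
    unfolding qstep_unfold Let_def D_def[symmetric] dm_def[symmetric] q_def[symmetric] V using ne oq by simp
  show ?thesis using qF qmin st by blast
qed

definition arrivals :: "nat \<Rightarrow> nat \<Rightarrow> enat list \<Rightarrow> (nat \<times> nat) list" where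
  "arrivals n i x = map (\<lambda>p. (psize i x p, p)) (sort_key (psize i x) [0..<n])"

lemma length_arrivals[simp]: "length (arrivals n i x) = n"
  by (simp add: arrivals_def)

lemma arrivals_site: "k < n \<Longrightarrow> snd (arrivals n i x ! k) < n"
proof -
  assume k: "k < n"
  have "sort_key (psize i x) [0..<n] ! k \<in> set (sort_key (psize i x) [0..<n])" by (rule nth_mem) (simp add: k)
  hence "sort_key (psize i x) [0..<n] ! k \<in> set [0..<n]" by (simp only: set_sort)
  thus ?thesis using k by (simp add: arrivals_def)
qed

lemma arrivals_size: "k < n \<Longrightarrow> fst (arrivals n i x ! k) = psize i x (snd (arrivals n i x ! k))"
  by (simp add: arrivals_def)

lemma arrivals_sorted: "k \<le> k' \<Longrightarrow> k' < n \<Longrightarrow> fst (arrivals n i x ! k) \<le> fst (arrivals n i x ! k')"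
proof -
  assume a: "k \<le> k'" "k' < n"
  have "sorted (map (psize i x) (sort_key (psize i x) [0..<n]))" by (rule sorted_sort_key)
  hence "map (psize i x) (sort_key (psize i x) [0..<n]) ! k \<le> map (psize i x) (sort_key (psize i x) [0..<n]) ! k'"
    using a by (intro sorted_nth_mono) auto
  thus ?thesis using a by (simp add: arrivals_def)
qed

lemma mset_arrival_sizes: "mset (map fst (arrivals n i x)) = mset (map (psize i x) [0..<n])"
proof -
  have "map fst (arrivals n i x) = map (psize i x) (sort_key (psize i x) [0..<n])" by (simp add: arrivals_def)
  also have "mset \<dots> = image_mset (psize i x) (mset (sort_key (psize i x) [0..<n]))" by (rule mset_map)
  also have "\<dots> = mset (map (psize i x) [0..<n])" by (simp add: mset_map)
  finally show ?thesis .
qed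

locale queue_sim =
  fixes n :: nat and T :: "nat set" and i :: nat and x :: "enat list"
  assumes Tn: "T \<subseteq> {..<n}"
begin

abbreviation "L \<equiv> arrivals n i x"

definition state :: "nat \<Rightarrow> (nat \<Rightarrow> nat option) \<times> (nat \<Rightarrow> nat option)" where
  "state k = fold (qstep n T) (take k L) (\<lambda>_. None, \<lambda>_. None)"

abbreviation "occ k \<equiv> fst (state k)"
abbreviation "fv k \<equiv> snd (state k)"

lemma state_0: "state 0 = (\<lambda>_. None, \<lambda>_. None)" by (simp add: state_def)

lemma state_Suc: "k < n \<Longrightarrow> state (Suc k) = qstep n T (L ! k) (state k)"
  unfolding state_def by (simp add: take_Suc_conv_app_nth)

lemma state_n: "state n = queue_run n T i x"
  unfolding state_def queue_run_def arrivals_def by simp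

lemma finT: "finite T" using Tn finite_subset by blast

lemma step_cases:
  assumes k: "k < n"
  obtains (full) "free_sites n T (occ k) = {}" "occ (Suc k) = occ k"
     "fv (Suc k) = (\<lambda>q. if q < n \<and> fv k q = None then Some (fst (L!k)) else fv k q)"
  | (place) q0 where "q0 \<in> free_sites n T (occ k)"
     "\<forall>r\<in>free_sites n T (occ k). cdist n (snd (L!k)) q0 \<le> cdist n (snd (L!k)) r"
     "occ (Suc k) = (occ k)(q0 := Some (fst (L!k)))"
     "fv (Suc k) = (\<lambda>r. if r < n \<and> cdist n (snd (L!k)) r \<le> cdist n (snd (L!k)) q0 \<and> fv k r = None
        then Some (fst (L!k)) else fv k r)"
proof -
  have jn: "snd (L!k) < n" using arrivals_site[OF k, of i x] by simp
  have st: "state (Suc k) = qstep n T (fst (L ! k), snd (L ! k)) (occ k, fv k)"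
    using state_Suc[OF k] by (metis prod.collapse)
  show ?thesis
  proof (cases "free_sites n T (occ k) = {}")
    case True
    have st': "state (Suc k) = (occ k, \<lambda>q. if q < n \<and> fv k q = None then Some (fst (L!k)) else fv k q)"
      unfolding st by (rule qstep_full[OF jn True])
    show ?thesis by (rule full) (use True st' in simp_all)
  next
    case False
    obtain q where q: "q \<in> free_sites n T (occ k)"
      "\<forall>r\<in>free_sites n T (occ k). cdist n (snd (L!k)) q \<le> cdist n (snd (L!k)) r"
      "qstep n T (fst (L!k), snd (L!k)) (occ k, fv k) = ((occ k)(q := Some (fst (L!k))),
         \<lambda>r. if r < n \<and> cdist n (snd (L!k)) r \<le> cdist n (snd (L!k)) q \<and> fv k r = None
           then Some (fst (L!k)) else fv k r)"
      using qstep_place[OF jn False] by blast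
    show ?thesis by (rule place[OF q(1,2)]) (use q(3) st in simp_all)
  qed
qed

end

lemma down_closed_eq_lessThan: assumes "finite S" "\<And>k k'. k' \<in> S \<Longrightarrow> k \<le> k' \<Longrightarrow> k \<in> S"
  shows "S = {..<card S}"
proof -
  have sub: "S \<subseteq> {..<card S}"
  proof
    fix k assume k: "k \<in> S"
    have "{..k} \<subseteq> S" using assms(2) k by auto
    hence "card {..k} \<le> card S" by (rule card_mono[OF assms(1)])
    thus "k \<in> {..<card S}" by simp
  qed
  show ?thesis by (rule card_subset_eq[OF _ sub]) simp_all
qed

context queue_sim begin

lemma occ_terminal: "k \<le> n \<Longrightarrow> occ k q \<noteq> None \<Longrightarrow> q \<in> T"
proof (induction k)
  case 0 thus ?case by (simp add: state_0)
next
  case (Suc k)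
  have k: "k < n" using Suc by simp
  show ?case
  using k proof (cases rule: step_cases)
    case full thus ?thesis using Suc by simp
  next
    case (place q0)
    thus ?thesis using Suc by (cases "q = q0") (auto simp: free_sites_def)
  qed
qed

lemma filled_subset: "k \<le> n \<Longrightarrow> {q. occ k q \<noteq> None} \<subseteq> T"
  using occ_terminal by auto

lemma filled_finite: "k \<le> n \<Longrightarrow> finite {q. occ k q \<noteq> None}"
  using filled_subset finT finite_subset by blast

lemma card_filled: "k \<le> n \<Longrightarrow> card {q. occ k q \<noteq> None} = min k (card T)"
proof (induction k)
  case 0 thus ?case by (simp add: state_0)
next
  case (Suc k)
  have k: "k < n" using Suc by simp
  have IH: "card {q. occ k q \<noteq> None} = min k (card T)" using Suc by simp
  show ?case
  using k proof (cases rule: step_cases)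
    case full
    note a = full
    have "T \<subseteq> {q. occ k q \<noteq> None}" using a Tn by (auto simp: free_sites_def)
    hence "{q. occ k q \<noteq> None} = T" by (rule equalityI[OF filled_subset[OF less_imp_le[OF k]]])
    hence "card {q. occ k q \<noteq> None} = card T" by simp
    thus ?thesis using a IH by simp
  next
    case (place q0)
    note q0 = place(1,3)
    have e: "{q. occ (Suc k) q \<noteq> None} = insert q0 {q. occ k q \<noteq> None}" using q0 by auto
    have nin: "q0 \<notin> {q. occ k q \<noteq> None}" using q0 by (simp add: free_sites_def)
    have c1: "card {q. occ (Suc k) q \<noteq> None} = Suc (card {q. occ k q \<noteq> None})"
      unfolding e using nin filled_finite[of k] k by simp
    have sub: "{q. occ k q \<noteq> None} \<subseteq> T" by (rule filled_subset) (use k in simp)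
    have "q0 \<in> T - {q. occ k q \<noteq> None}" using q0 by (auto simp: free_sites_def)
    hence "{q. occ k q \<noteq> None} \<subset> T" using sub by blast
    hence "card {q. occ k q \<noteq> None} < card T" by (rule psubset_card_mono[OF finT])
    thus ?thesis using c1 IH by simp
  qed
qed

lemma placed_before_full: assumes k: "k < n" "free_sites n T (occ k) \<noteq> {}" shows "k < card T"
proof -
  obtain q where q: "q \<in> free_sites n T (occ k)" using assms by auto
  have sub: "{q. occ k q \<noteq> None} \<subseteq> T" by (rule filled_subset) (use k in simp)
  have "q \<in> T - {q. occ k q \<noteq> None}" using q by (auto simp: free_sites_def)
  hence "{q. occ k q \<noteq> None} \<subset> T" using sub by blast
  hence "card {q. occ k q \<noteq> None} < card T" by (rule psubset_card_mono[OF finT])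
  thus ?thesis using card_filled[of k] k by simp
qed

lemma occ_final_iff: "occ n q \<noteq> None \<longleftrightarrow> q \<in> T"
proof -
  have cT: "card T \<le> n" using card_mono[OF _ Tn] by simp
  have "card {q. occ n q \<noteq> None} = card T" using card_filled[of n] cT by simp
  hence "{q. occ n q \<noteq> None} = T" using filled_subset[of n] finT by (simp add: card_subset_eq)
  thus ?thesis by auto
qed

lemma occ_mono1: "k < n \<Longrightarrow> occ k q = Some a \<Longrightarrow> occ (Suc k) q = Some a"
proof -
  assume k: "k < n" and a: "occ k q = Some a"
  show ?thesis
  using k proof (cases rule: step_cases)
    case full thus ?thesis using a by simp
  next
    case (place q0) thus ?thesis using a by (auto simp: free_sites_def)
  qed
qed

lemma fv_mono1: "k < n \<Longrightarrow> fv k q = Some a \<Longrightarrow> fv (Suc k) q = Some a"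
proof -
  assume k: "k < n" and a: "fv k q = Some a"
  show ?thesis
  using k proof (cases rule: step_cases)
    case full thus ?thesis using a by simp
  next
    case (place q0) thus ?thesis using a by simp
  qed
qed

lemma occ_mono: "k \<le> k' \<Longrightarrow> k' \<le> n \<Longrightarrow> occ k q = Some a \<Longrightarrow> occ k' q = Some a"
proof (induction k' rule: dec_induct)
  case base thus ?case by simp
next
  case (step m) thus ?case using occ_mono1 by simp
qed

lemma fv_mono: "k \<le> k' \<Longrightarrow> k' \<le> n \<Longrightarrow> fv k q = Some a \<Longrightarrow> fv k' q = Some a"
proof (induction k' rule: dec_induct)
  case base thus ?case by simp
next
  case (step m) thus ?case using fv_mono1 by simp
qed

lemma occ_size_arrival: "k \<le> n \<Longrightarrow> occ k q = Some a \<Longrightarrow> \<exists>k0<k. k0 < card T \<and> a = fst (L!k0)"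
proof (induction k)
  case 0 thus ?case by (simp add: state_0)
next
  case (Suc k)
  have k: "k < n" using Suc by simp
  show ?case
  using k proof (cases rule: step_cases)
    case full
    thus ?thesis using Suc by (metis Suc_leD less_SucI)
  next
    case (place q0)
    note q0 = place(1,3)
    have kT: "k < card T" using placed_before_full[OF k] q0(1) by auto
    show ?thesis
    proof (cases "q = q0")
      case True thus ?thesis using q0 Suc.prems kT by auto
    next
      case False thus ?thesis using q0 Suc by (metis Suc_leD fun_upd_other less_SucI)
    qed
  qed
qed

lemma fv_size_arrival: "k \<le> n \<Longrightarrow> fv k q = Some a \<Longrightarrow> \<exists>k0<k. a = fst (L!k0)"
proof (induction k)
  case 0 thus ?case by (simp add: state_0)
next
  case (Suc k)
  have k: "k < n" using Suc by simp
  show ?case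
  using k proof (cases rule: step_cases)
    case full
    note h = full(3)
    show ?thesis
    proof (cases "fv k q = None")
      case True thus ?thesis using h Suc.prems by (auto split: if_splits)
    next
      case False thus ?thesis using h Suc by (auto split: if_splits) (metis less_SucI)
    qed
  next
    case (place q0)
    note h = place(4)
    show ?thesis
    proof (cases "fv k q = None")
      case True thus ?thesis using h Suc.prems by (auto split: if_splits)
    next
      case False thus ?thesis using h Suc by (auto split: if_splits) (metis less_SucI)
    qed
  qed
qed

lemma fv_final_defined: assumes "card T < n" "q < n" shows "fv n q \<noteq> None"
proof -
  define k where "k = card T"
  have k: "k < n" using assms k_def by simp
  have "card {q. occ k q \<noteq> None} = card T" using card_filled[of k] k k_def by simp
  hence e: "{q. occ k q \<noteq> None} = T" using filled_subset[of k] k finT by (simp add: card_subset_eq)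
  have fr: "free_sites n T (occ k) = {}" using e by (auto simp: free_sites_def)
  have "fv (Suc k) q \<noteq> None"
  using k proof (cases rule: step_cases)
    case full thus ?thesis using assms(2) by auto
  next
    case (place q0) thus ?thesis using fr by simp
  qed
  then obtain a where "fv (Suc k) q = Some a" by auto
  hence "fv n q = Some a" using fv_mono[of "Suc k" n q a] k by simp
  thus ?thesis by simp
qed

end

section \<open>The output of a queue\<close>

lemma length_filter_mset: "length (filter P xs) = size (filter_mset P (mset xs))"
  by (metis mset_filter size_mset)

lemma length_filter_arrival_sizes: "length (filter P (map fst (arrivals n i x))) = length (filter P (map (psize i x) [0..<n]))"
  unfolding length_filter_mset mset_arrival_sizes ..

locale level_queue = queue_sim +
  assumes xlen: "length x = n"
  and xfin: "\<And>p. p < n \<Longrightarrow> x!p \<noteq> \<infinity> \<Longrightarrow> x!p < enat i"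
  and xpos: "\<And>p. p < n \<Longrightarrow> x!p \<noteq> 0"
  and ipos: "0 < i"
begin

definition "npart = card {p. p < n \<and> x!p \<noteq> \<infinity>}"

lemma psize_less_iff: assumes "p < n" shows "psize i x p < i \<longleftrightarrow> x!p \<noteq> \<infinity>"
proof (cases "x!p")
  case (enat a)
  hence "enat a < enat i" using xfin[OF assms] by simp
  thus ?thesis using enat by (simp add: psize_def)
next
  case infinity thus ?thesis by (simp add: psize_def)
qed

lemma psize_le_level: assumes "p < n" shows "psize i x p \<le> i"
proof (cases "x!p")
  case (enat a)
  hence "enat a < enat i" using xfin[OF assms] by simp
  thus ?thesis using enat by (simp add: psize_def)
next
  case infinity thus ?thesis by (simp add: psize_def)
qed

lemma psize_pos: assumes "p < n" shows "0 < psize i x p"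
proof (cases "x!p")
  case (enat a)
  hence "a \<noteq> 0" using xpos[OF assms] by (auto simp: zero_enat_def)
  thus ?thesis using enat by (simp add: psize_def)
next
  case infinity thus ?thesis using ipos by (simp add: psize_def)
qed

lemma arrival_le_level: "k < n \<Longrightarrow> fst (L!k) \<le> i"
  using arrivals_size[of k n i x] arrivals_site[of k n i x] psize_le_level by simp

lemma arrival_pos: "k < n \<Longrightarrow> 0 < fst (L!k)"
  using arrivals_size[of k n i x] arrivals_site[of k n i x] psize_pos by simp

lemma arrival_small_iff: "k < n \<Longrightarrow> fst (L!k) < i \<longleftrightarrow> k < npart"
proof -
  assume k: "k < n"
  define S where "S = {k. k < n \<and> fst (L!k) < i}"
  have finS: "finite S" unfolding S_def by auto
  have dc: "\<And>a b. b \<in> S \<Longrightarrow> a \<le> b \<Longrightarrow> a \<in> S"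
  proof -
    fix a b assume "b \<in> S" "a \<le> b"
    hence "b < n" "fst (L!b) < i" "a \<le> b" unfolding S_def by auto
    moreover have "fst (L!a) \<le> fst (L!b)" using arrivals_sorted[of a b n i x] calculation by simp
    ultimately show "a \<in> S" unfolding S_def by simp
  qed
  have "card S = card {ia. ia < length (map fst L) \<and> map fst L ! ia < i}"
    by (rule arg_cong[where f=card]) (auto simp: S_def)
  also have "\<dots> = length (filter (\<lambda>a. a < i) (map fst L))" by (simp only: length_filter_conv_card)
  also have "\<dots> = length (filter (\<lambda>a. a < i) (map (psize i x) [0..<n]))" by (rule length_filter_arrival_sizes)
  also have "\<dots> = card {ia. ia < length (map (psize i x) [0..<n]) \<and> map (psize i x) [0..<n] ! ia < i}"
    by (simp only: length_filter_conv_card)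
  also have "\<dots> = card {p. p < n \<and> psize i x p < i}" by (rule arg_cong[where f=card]) auto
  also have "{p. p < n \<and> psize i x p < i} = {p. p < n \<and> x!p \<noteq> \<infinity>}" using psize_less_iff by auto
  finally have cS: "card S = npart" unfolding npart_def .
  have "S = {..<card S}" by (rule down_closed_eq_lessThan[OF finS dc])
  hence "k \<in> S \<longleftrightarrow> k < npart" using cS by auto
  thus ?thesis using k S_def by simp
qed

lemma npart_le: "npart \<le> n"
proof -
  have "{p. p < n \<and> x!p \<noteq> \<infinity>} \<subseteq> {..<n}" by auto
  thus ?thesis unfolding npart_def using card_mono[of "{..<n}"] by fastforce
qed

lemma queue_out_nth: "q < n \<Longrightarrow> queue_out n T i x ! q = (if q \<in> T then enat (the (occ n q)) else \<infinity>)"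
proof -
  have af: "\<And>q. q \<in> T \<Longrightarrow> occ n q \<noteq> None" using occ_final_iff by blast
  assume "q < n" thus ?thesis unfolding queue_out_def state_n[symmetric] by (auto dest: af split: option.split)
qed

lemma length_queue_out[simp]: "length (queue_out n T i x) = n" by (simp add: queue_out_def)

lemma occ_final_range: "occ n q = Some a \<Longrightarrow> 0 < a \<and> a \<le> i"
proof -
  assume "occ n q = Some a"
  then obtain k0 where "k0 < n" "a = fst (L!k0)" using occ_size_arrival[of n q a] by auto
  thus ?thesis using arrival_le_level arrival_pos by simp
qed

lemma queue_out_finite_iff: "q < n \<Longrightarrow> queue_out n T i x ! q \<noteq> \<infinity> \<longleftrightarrow> q \<in> T"
  using queue_out_nth by simp

lemma queue_out_range: "q < n \<Longrightarrow> queue_out n T i x ! q \<noteq> \<infinity> \<Longrightarrow> queue_out n T i x ! q \<noteq> 0 \<and> queue_out n T i x ! q \<le> enat i"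
proof -
  assume q: "q < n" "queue_out n T i x ! q \<noteq> \<infinity>"
  hence qT: "q \<in> T" using queue_out_finite_iff by simp
  then obtain a where a: "occ n q = Some a" using occ_final_iff by auto
  have "0 < a \<and> a \<le> i" using occ_final_range[OF a] .
  thus ?thesis using queue_out_nth[OF q(1)] qT a by (simp add: zero_enat_def)
qed

lemma queue_out_has_level: assumes "npart < card T" shows "\<exists>q<n. queue_out n T i x ! q = enat i"
proof -
  have cn: "npart < n" using assms card_mono[OF _ Tn] by simp
  have "card {q. occ npart q \<noteq> None} = npart" using card_filled[of npart] cn assms by simp
  have fr: "free_sites n T (occ npart) \<noteq> {}"
  proof
    assume e: "free_sites n T (occ npart) = {}"
    have "T \<subseteq> {q. occ npart q \<noteq> None}" using e Tn by (auto simp: free_sites_def)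
    hence "card T \<le> card {q. occ npart q \<noteq> None}" by (rule card_mono[OF filled_finite[OF less_imp_le[OF cn]]])
    thus False using \<open>card {q. occ npart q \<noteq> None} = npart\<close> assms by simp
  qed
  have Li: "fst (L!npart) = i" using arrival_small_iff[OF cn] arrival_le_level[OF cn] by simp
  obtain q0 where q0: "q0 \<in> free_sites n T (occ npart)" "occ (Suc npart) = (occ npart)(q0 := Some (fst (L!npart)))"
    using step_cases[OF cn] fr by blast
  have "occ (Suc npart) q0 = Some i" using q0 Li by simp
  hence "occ n q0 = Some i" using occ_mono[of "Suc npart" n q0 i] cn by simp
  moreover have "q0 \<in> T" "q0 < n" using q0 by (auto simp: free_sites_def)
  ultimately show ?thesis using queue_out_nth by auto
qed

lemma queue_out_no_level: assumes "card T \<le> npart" "q < n" shows "queue_out n T i x ! q \<noteq> enat i"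
proof
  assume h: "queue_out n T i x ! q = enat i"
  hence qT: "q \<in> T" using queue_out_finite_iff[OF assms(2)] by auto
  then obtain a where a: "occ n q = Some a" using occ_final_iff by auto
  obtain k0 where k0: "k0 < card T" "a = fst (L!k0)" using occ_size_arrival[of n q a] a by auto
  have "k0 < n" using k0 assms npart_le by simp
  hence "a < i" using arrival_small_iff k0 assms by simp
  thus False using h queue_out_nth[OF assms(2)] qT a by simp
qed

end

section \<open>Removing a terminal site from a queue\<close>

definition queue_code :: "nat \<Rightarrow> nat \<Rightarrow> nat set \<Rightarrow> (nat \<Rightarrow> nat option) \<Rightarrow> enat list" where
  "queue_code n B S oc = map (\<lambda>q. if q \<in> S then (case oc q of Some a \<Rightarrow> enat a | None \<Rightarrow> enat B) else \<infinity>) [0..<n]"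

lemma length_queue_code[simp]: "length (queue_code n B S oc) = n" by (simp add: queue_code_def)

lemma queue_code_nth: "q < n \<Longrightarrow> queue_code n B S oc ! q = (if q \<in> S then (case oc q of Some a \<Rightarrow> enat a | None \<Rightarrow> enat B) else \<infinity>)"
  by (simp add: queue_code_def)

lemma queue_code_update: "q0 \<in> S \<Longrightarrow> q0 < n \<Longrightarrow> queue_code n B S (oc(q0 := Some a)) = (queue_code n B S oc)[q0 := enat a]"
  by (intro nth_equalityI) (auto simp: queue_code_nth nth_list_update)

lemma psize_le: "p < length x \<Longrightarrow> (x!p \<noteq> \<infinity> \<Longrightarrow> x!p < enat i) \<Longrightarrow> psize i x p \<le> i"
  by (cases "x!p") (auto simp: psize_def)

locale queue_pair =
  fixes n :: nat and T :: "nat set" and i :: nat and x :: "enat list" and j0 :: nat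
  assumes Tn: "T \<subseteq> {..<n}" and j0T: "j0 \<in> T" and xlen: "length x = n"
  and xfin: "\<And>p. p < n \<Longrightarrow> x!p \<noteq> \<infinity> \<Longrightarrow> x!p < enat i"
begin

sublocale A: queue_sim n T i x by unfold_locales (rule Tn)
sublocale B: queue_sim n "T - {j0}" i x by unfold_locales (use Tn in auto)

abbreviation "L \<equiv> arrivals n i x"
abbreviation "hi \<equiv> Suc i"
abbreviation "zA k \<equiv> queue_code n hi T (A.occ k)"
abbreviation "zB k \<equiv> queue_code n hi (T - {j0}) (B.occ k)"

lemma j0n: "j0 < n" using j0T Tn by auto

lemma arrival_size_le: "k < n \<Longrightarrow> fst (L!k) \<le> i"
  using arrivals_size[of k n i x] arrivals_site[of k n i x] psize_le[of _ x i] xfin xlen by simp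

lemma occ_le_later_arrival: assumes "k \<le> n" "k' < n" "k \<le> k'" "A.occ k q = Some a" shows "a \<le> fst (L!k')"
proof -
  obtain k0 where "k0 < k" "a = fst (L!k0)" using A.occ_size_arrival[OF assms(1,4)] by blast
  thus ?thesis using arrivals_sorted[of k0 k' n i x] assms by simp
qed

lemma two_level_code: assumes k: "k < n" shows "two_level (zA k) j0 (fst (L!k)) hi"
proof
  show "j0 < length (zA k)" using j0n by simp
  show "zA k ! j0 \<noteq> \<infinity>" using j0n j0T by (simp add: queue_code_nth split: option.split)
  show "fst (L!k) < hi" using arrival_size_le[OF k] by simp
  fix q assume q: "q < length (zA k)" "zA k ! q \<noteq> \<infinity>"
  show "zA k ! q \<le> enat (fst (L!k)) \<or> zA k ! q = enat hi"
    using q occ_le_later_arrival[OF less_imp_le[OF k] k le_refl] by (auto simp: queue_code_nth split: option.splits if_splits)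
qed

lemma tops_code: "k < n \<Longrightarrow> two_level.tops (zA k) hi = free_sites n T (A.occ k)"
proof -
  assume k: "k < n"
  interpret z: two_level "zA k" j0 "fst (L!k)" hi by (rule two_level_code[OF k])
  show ?thesis
  proof (intro set_eqI iffI)
    fix q assume "q \<in> z.tops"
    thus "q \<in> free_sites n T (A.occ k)"
      using occ_le_later_arrival[OF less_imp_le[OF k] k le_refl, of q] arrival_size_le[OF k]
      by (auto simp: z.tops_def free_sites_def queue_code_nth split: if_splits option.splits)
  next
    fix q assume "q \<in> free_sites n T (A.occ k)"
    thus "q \<in> z.tops" by (auto simp: z.tops_def free_sites_def queue_code_nth)
  qed
qed

lemma occ_B_le: assumes "k \<le> n" "B.occ k q = Some a" shows "a \<le> i"
proof -
  obtain k0 where "k0 < k" "a = fst (L!k0)" using B.occ_size_arrival[OF assms] by blast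
  thus ?thesis using arrival_size_le[of k0] assms by simp
qed

lemma free_B_iff_code: assumes "q < n" "k \<le> n" shows "q \<in> free_sites n (T - {j0}) (B.occ k) \<longleftrightarrow> zB k ! q = enat hi"
  using assms occ_B_le[OF assms(2), of q] by (auto simp: free_sites_def queue_code_nth split: option.splits)

lemma code_A_0: "zA 0 = map (\<lambda>q. if q \<in> T then enat hi else \<infinity>) [0..<n]"
  by (intro nth_equalityI) (auto simp: queue_code_nth A.state_0)

lemma code_B_0: "zB 0 = map (\<lambda>q. if q \<in> T - {j0} then enat hi else \<infinity>) [0..<n]"
  by (intro nth_equalityI) (auto simp: queue_code_nth B.state_0)

context
  fixes k assumes k: "k < n" and code_k: "zB k = jump (zA k) j0"
begin

interpretation z: two_level "zA k" j0 "fst (L!k)" hi by (rule two_level_code[OF k])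

lemma free_B_jump_iff: "q < n \<Longrightarrow> q \<in> free_sites n (T - {j0}) (B.occ k) \<longleftrightarrow> jump (zA k) j0 ! q = enat hi"
  using free_B_iff_code[of q k] k code_k by simp

lemma free_B_empty: "free_sites n T (A.occ k) = {} \<Longrightarrow> free_sites n (T - {j0}) (B.occ k) = {}"
  using free_B_jump_iff z.jump_no_hi tops_code[OF k] by (auto simp: free_sites_def)

lemma free_B_eq:
  assumes h: "h \<in> free_sites n T (A.occ k)" "\<forall>q\<in>free_sites n T (A.occ k). cdist n j0 h \<le> cdist n j0 q"
  shows "free_sites n (T - {j0}) (B.occ k) = free_sites n T (A.occ k) - {h}"
proof (intro set_eqI iffI)
  have hmin: "\<And>q. q \<in> z.tops \<Longrightarrow> cdist (length (zA k)) j0 h \<le> cdist (length (zA k)) j0 q"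
    using h tops_code[OF k] by simp
  note hi_iff = z.jump_hi_iff[OF _ hmin, unfolded tops_code[OF k]]
  fix q
  show "q \<in> free_sites n (T - {j0}) (B.occ k) \<Longrightarrow> q \<in> free_sites n T (A.occ k) - {h}"
    using free_B_jump_iff[of q] hi_iff[OF h(1), of q] by (auto simp: free_sites_def)
  show "q \<in> free_sites n T (A.occ k) - {h} \<Longrightarrow> q \<in> free_sites n (T - {j0}) (B.occ k)"
    using free_B_jump_iff[of q] hi_iff[OF h(1), of q] by (auto simp: free_sites_def)
qed

lemma free_B_subset: "free_sites n (T - {j0}) (B.occ k) \<subseteq> free_sites n T (A.occ k)"
proof (cases "free_sites n T (A.occ k) = {}")
  case False
  have "finite (free_sites n T (A.occ k))" by (auto simp: free_sites_def)
  then obtain h where "h \<in> free_sites n T (A.occ k)" "\<forall>q\<in>free_sites n T (A.occ k). cdist n j0 h \<le> cdist n j0 q"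
    using finite_argmin[OF _ False] by blast
  thus ?thesis using free_B_eq by auto
qed (use free_B_empty in simp)

text \<open>The particle arriving at step \<open>k\<close> stops at \<open>qA\<close> in the first queue.  In the second queue
  it stops at the same site unless \<open>qA\<close> is the first free site seen from \<open>j0\<close>, in which case it
  moves on to the second such site, if any.\<close>
lemma code_B_Suc_place:
  assumes qA: "qA \<in> free_sites n T (A.occ k)"
    "\<forall>r\<in>free_sites n T (A.occ k). cdist n (snd (L!k)) qA \<le> cdist n (snd (L!k)) r"
    and A_Suc: "A.occ (Suc k) = (A.occ k)(qA := Some (fst (L!k)))"
  shows "zB (Suc k) = jump (zA (Suc k)) j0"
proof -
  define s where "s = fst (L!k)"
  define p where "p = snd (L!k)"
  define F where "F = free_sites n T (A.occ k)"
  have pn: "p < n" unfolding p_def by (rule arrivals_site[OF k])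
  have Fn: "F \<subseteq> {..<n}" and finF: "finite F" by (auto simp: F_def free_sites_def)
  have FBn: "free_sites n (T - {j0}) (B.occ k) \<subseteq> {..<n}" by (auto simp: free_sites_def)
  have qAT: "qA \<in> T" "qA < n" using qA(1) by (auto simp: free_sites_def)
  have zA': "zA (Suc k) = (zA k)[qA := enat s]" using A_Suc queue_code_update[OF qAT] s_def by simp
  obtain h where h: "h \<in> F" "\<forall>q\<in>F. cdist n j0 h \<le> cdist n j0 q"
    using finite_argmin[OF finF] qA(1) unfolding F_def by blast
  have hmin: "\<And>q. q \<in> z.tops \<Longrightarrow> cdist (length (zA k)) j0 h \<le> cdist (length (zA k)) j0 q"
    using h tops_code[OF k] unfolding F_def by simp
  have hz: "h \<in> z.tops" using h(1) tops_code[OF k] unfolding F_def by simp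
  have FB: "free_sites n (T - {j0}) (B.occ k) = F - {h}" using free_B_eq h unfolding F_def by simp
  have B_Suc: "zB (Suc k) = (zB k)[q := enat s]" if "q \<in> F - {h}"
    "\<forall>r\<in>F - {h}. cdist n p q \<le> cdist n p r" for q
  using k proof (cases rule: B.step_cases)
    case (place qB)
    have "qB = q" using cdist_argmin_unique[OF pn place(1) _ FBn] place(2) that FB p_def by auto
    moreover have "qB \<in> T - {j0}" "qB < n" using place(1) by (auto simp: free_sites_def)
    ultimately show ?thesis using place(3) queue_code_update s_def by simp
  qed (use that FB in blast)
  show ?thesis
  proof (cases "qA = h")
    case False
    have "zB (Suc k) = (zB k)[qA := enat s]" using B_Suc[of qA] qA False unfolding F_def p_def by auto
    thus ?thesis using code_k zA' z.jump_update_later_top[OF hz hmin _ False] qA(1) tops_code[OF k]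
      unfolding s_def by simp
  next
    case True
    show ?thesis
    proof (cases "F - {h} = {}")
      case True
      have "B.occ (Suc k) = B.occ k"
        using k by (cases rule: B.step_cases) (use True FB in simp_all)
      moreover have "z.tops = {h}" using True h(1) tops_code[OF k] unfolding F_def by auto
      ultimately show ?thesis using code_k zA' z.jump_update_first_top[OF hz hmin, of h] \<open>qA = h\<close>
        unfolding s_def by simp
    next
      case False
      obtain h' where h': "h' \<in> F - {h}" "\<forall>q\<in>F - {h}. cdist n j0 h' \<le> cdist n j0 q"
        using finite_argmin[of "F - {h}"] finF False by blast
      have "zB (Suc k) = (zB k)[h' := enat s]"
      proof (rule B_Suc[OF h'(1)], intro ballI)
        fix r assume r: "r \<in> F - {h}"
        obtain q where q: "q \<in> F - {h}" "\<forall>r\<in>F - {h}. cdist n p q \<le> cdist n p r"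
          using finite_argmin[of "F - {h}" "cdist n p"] finF False by blast
        have "q = h'" using second_argmin_indep[OF pn j0n Fn h(1) _ h(2) q h'] qA \<open>qA = h\<close>
          unfolding F_def p_def by simp
        thus "cdist n p h' \<le> cdist n p r" using q(2) r by blast
      qed
      thus ?thesis using code_k zA' z.jump_update_first_top[OF hz hmin, of h'] h' \<open>qA = h\<close>
        tops_code[OF k] unfolding F_def s_def by auto
    qed
  qed
qed

lemma code_B_Suc: "zB (Suc k) = jump (zA (Suc k)) j0"
using k proof (cases rule: A.step_cases)
  case full
  have "B.occ (Suc k) = B.occ k"
    using k by (cases rule: B.step_cases) (use free_B_empty[OF full(1)] in simp_all)
  thus ?thesis using full code_k by simp
qed (rule code_B_Suc_place)

end

lemma code_B_eq_jump: "k \<le> n \<Longrightarrow> zB k = jump (zA k) j0"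
proof (induction k)
  case 0
  interpret z: cyclic_start "zA 0" j0 by unfold_locales (simp add: j0n)
  have "jump (zA 0) j0 = (zA 0)[j0 := \<infinity>]"
    by (rule z.jump_of_max_start) (use j0n j0T in \<open>auto simp: code_A_0 split: if_splits\<close>)
  thus ?case unfolding code_A_0 code_B_0 using j0T j0n by (intro nth_equalityI) (auto simp: nth_list_update)
next
  case (Suc k)
  thus ?case using code_B_Suc by simp
qed

lemma queue_out_code: "queue_out n S i x = queue_code n b S (queue_sim.occ n S i x n)" if "S \<subseteq> {..<n}"
proof -
  interpret R: queue_sim n S i x by unfold_locales (rule that)
  have af: "\<And>q. q \<in> S \<Longrightarrow> R.occ n q \<noteq> None" using R.occ_final_iff by blast
  show ?thesis unfolding queue_out_def R.state_n[symmetric]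
    by (intro nth_equalityI) (auto simp: queue_code_nth dest: af split: option.splits)
qed

theorem queue_out_remove_terminal: "queue_out n (T - {j0}) i x = jump (queue_out n T i x) j0"
  using code_B_eq_jump[of n] queue_out_code[of T hi] queue_out_code[of "T - {j0}" hi] Tn by auto

context
  fixes j :: nat
  assumes jj: "j0 < j" "j < n" "\<forall>q. j0 < q \<and> q \<le> j \<longrightarrow> q \<in> T" "A.occ n j = Some i"
begin

text \<open>If the arriving particle passes a site off \<open>T\<close> in the second queue but not in the first, it
  has the largest size \<open>i\<close>: otherwise \<open>j\<close> is still free, the particle stops no later than \<open>j\<close> in
  the second queue, and the site would lie between \<open>j0\<close> and \<open>j\<close>, where all sites are terminal.\<close>
lemma late_visitor_size: assumes k: "k < n" and qA: "qA \<in> free_sites n T (A.occ k)" "\<forall>r\<in>free_sites n T (A.occ k). cdist n (snd (L!k)) qA \<le> cdist n (snd (L!k)) r"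
  and Bc: "free_sites n (T - {j0}) (B.occ k) = {} \<or> (qB \<in> free_sites n (T - {j0}) (B.occ k) \<and>
        (\<forall>r\<in>free_sites n (T - {j0}) (B.occ k). cdist n (snd (L!k)) qB \<le> cdist n (snd (L!k)) r) \<and> cdist n (snd (L!k)) r \<le> cdist n (snd (L!k)) qB)"
  and r: "r < n" "cdist n (snd (L!k)) qA < cdist n (snd (L!k)) r" "r \<notin> T"
  and Aocc: "A.occ (Suc k) = (A.occ k)(qA := Some (fst (L!k)))"
  shows "fst (L!k) = i"
proof (rule ccontr)
  assume ne: "fst (L!k) \<noteq> i"
  define s where "s = fst (L!k)"
  define p where "p = snd (L!k)"
  have pn: "p < n" unfolding p_def by (rule arrivals_site[OF k])
  have si: "s < i" using arrival_size_le[OF k] ne s_def by simp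
  define FA where "FA = free_sites n T (A.occ k)"
  define FBs where "FBs = free_sites n (T - {j0}) (B.occ k)"
  have FAn: "FA \<subseteq> {..<n}" by (auto simp: FA_def free_sites_def)
  have finFA: "finite FA" using FAn finite_subset by blast
  have FAne: "FA \<noteq> {}" using qA FA_def by auto
  obtain h where h: "h \<in> FA" "\<forall>q\<in>FA. cdist n j0 h \<le> cdist n j0 q" using finite_argmin[OF finFA FAne] by blast
  have FBe: "FBs = FA - {h}" using free_B_eq[OF k code_B_eq_jump[OF less_imp_le[OF k]]] h unfolding FA_def FBs_def by blast
  have jT: "j \<in> T" "j < n" using jj by auto
  have qAh: "qA = h"
  proof (rule ccontr)
    assume "qA \<noteq> h"
    hence qAB: "qA \<in> FBs" using FBe qA FA_def by auto
    hence "qB \<in> FBs \<and> cdist n p qB \<le> cdist n p qA \<and> cdist n p r \<le> cdist n p qB" using Bc FBs_def p_def by auto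
    thus False using r(2) p_def by simp
  qed
  have jfree: "A.occ k j = None"
  proof (rule ccontr)
    assume "A.occ k j \<noteq> None"
    then obtain a where a: "A.occ k j = Some a" by auto
    have "A.occ n j = Some a" using A.occ_mono[of k n j a] a k by simp
    hence "a = i" using jj by simp
    moreover have "a \<le> s" using occ_le_later_arrival[of k k j a] a k s_def by simp
    ultimately show False using si by simp
  qed
  have jFA: "j \<in> FA" using jfree jT by (simp add: FA_def free_sites_def)
  have jh: "j \<noteq> h"
  proof
    assume "j = h"
    hence "A.occ (Suc k) j = Some s" using Aocc qAh s_def by simp
    hence "A.occ n j = Some s" using A.occ_mono[of "Suc k" n j s] k by simp
    thus False using jj si by simp
  qed
  have jFB: "j \<in> FBs" using jFA jh FBe by simp
  have Bsome: "qB \<in> FBs" "\<forall>r\<in>FBs. cdist n p qB \<le> cdist n p r" "cdist n p r \<le> cdist n p qB"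
    using Bc jFB unfolding FBs_def p_def by auto
  have finFB: "finite FBs" using finFA FBe by simp
  have FBne: "FBs \<noteq> {}" using jFB by auto
  obtain h' where h': "h' \<in> FBs" "\<forall>q\<in>FBs. cdist n j0 h' \<le> cdist n j0 q" using finite_argmin[OF finFB FBne] by blast
  have qBh': "qB = h'"
    by (rule second_argmin_indep[OF pn j0n FAn h(1) _ h(2)]) (use Bsome h' FBe qA qAh p_def FA_def in auto)
  have hn: "h < n" "qB < n" using h Bsome FAn FBe by auto
  have ohqB: "cdist n j0 h < cdist n j0 qB"
  proof -
    have "cdist n j0 h \<le> cdist n j0 qB" using h(2) Bsome(1) FBe by auto
    moreover have "cdist n j0 h \<noteq> cdist n j0 qB" using cdist_inj[OF j0n hn] Bsome(1) FBe by auto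
    ultimately show ?thesis by simp
  qed
  have reg: "cdist n j0 h < cdist n j0 r \<and> cdist n j0 r \<le> cdist n j0 qB"
    by (rule cdist_interval_transfer[OF pn j0n hn(1) hn(2) r(1)]) (use r(2) qAh Bsome(3) ohqB p_def in auto)
  have "cdist n j0 qB \<le> cdist n j0 j" using h'(2) jFB qBh' by auto
  hence "j0 < r \<and> r \<le> j" using cdist_le_imp_between[OF jj(1) jj(2) r(1)] reg by simp
  thus False using jj(3) r(3) by auto
qed

lemma first_visit_step: assumes "fa' = (if vA \<and> fa = None then Some s else fa)"
  "fb' = (if vB \<and> fb = None then Some s else fb)"
  "fb = fa \<or> (fa = None \<and> fb = Some i)" "vA \<longrightarrow> vB" "vB \<and> \<not> vA \<longrightarrow> s = i"
  "fb = Some i \<longrightarrow> s = i"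
  shows "fb' = fa' \<or> (fa' = None \<and> fb' = Some i)"
  using assms by auto

lemma fv_B_max_size: assumes "k < n" "B.fv k q = Some i" shows "fst (L!k) = i"
proof -
  obtain k0 where "k0 < k" "i = fst (L!k0)" using B.fv_size_arrival[of k q i] assms by auto
  hence "i \<le> fst (L!k)" using arrivals_sorted[of k0 k n i x] assms by simp
  thus ?thesis using arrival_size_le[OF assms(1)] by simp
qed

lemma fv_B_j0_Suc:
  assumes k: "k < n" and IH: "B.fv k j0 = A.occ k j0"
  shows "B.fv (Suc k) j0 = A.occ (Suc k) j0"
proof -
  define s where "s = fst (L!k)"
  define p where "p = snd (L!k)"
  have pn: "p < n" unfolding p_def by (rule arrivals_site[OF k])
  define FA where "FA = free_sites n T (A.occ k)"
  define FBs where "FBs = free_sites n (T - {j0}) (B.occ k)"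
  have FBn: "FBs \<subseteq> {..<n}" by (auto simp: FBs_def free_sites_def)
  have FBsub: "FBs \<subseteq> FA" using free_B_subset[OF k code_B_eq_jump[OF less_imp_le[OF k]]] FA_def FBs_def by simp
  show ?thesis
  proof (cases "A.occ k j0")
    case (Some a)
    have "B.fv k j0 = Some a" using IH Some by simp
    thus ?thesis using B.fv_mono1[OF k] A.occ_mono1[OF k] Some by simp
  next
    case None
    have j0FA: "j0 \<in> FA" using None j0T j0n by (simp add: FA_def free_sites_def)
    have hmin: "\<forall>q\<in>FA. cdist n j0 j0 \<le> cdist n j0 q" using j0n by simp
    have FBe: "FBs = FA - {j0}" using free_B_eq[OF k code_B_eq_jump[OF less_imp_le[OF k]]] j0FA hmin FA_def FBs_def by simp
    have Bj0: "B.fv k j0 = None" using IH None by simp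
    show ?thesis
    using k proof (cases rule: A.step_cases)
      case full thus ?thesis using j0FA FA_def by simp
    next
      case (place qA)
      show ?thesis
      proof (cases "qA = j0")
        case True
        have "A.occ (Suc k) j0 = Some s" using place(3) True s_def by simp
        moreover have "B.fv (Suc k) j0 = Some s"
        using k proof (cases rule: B.step_cases)
          case full thus ?thesis using Bj0 j0n s_def by simp
        next
          case (place qB)
          have "cdist n p qA \<le> cdist n p qB" using \<open>qA \<in> _\<close> place(1) FBsub FA_def FBs_def \<open>\<forall>r\<in>free_sites n T (A.occ k). _\<close> p_def by auto
          thus ?thesis using place(4) True Bj0 j0n s_def p_def by simp
        qed
        ultimately show ?thesis by simp
      next
        case False
        have qAB: "qA \<in> FBs" using FBe place(1) False FA_def by simp
        have Aj0: "A.occ (Suc k) j0 = None" using place(3) False None by simp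
        have lt: "cdist n p qA < cdist n p j0"
        proof -
          have "cdist n p qA \<le> cdist n p j0" using place(2) j0FA FA_def p_def by simp
          moreover have "cdist n p qA \<noteq> cdist n p j0" using cdist_inj[OF pn] False place(1) j0n by (auto simp: free_sites_def)
          ultimately show ?thesis by simp
        qed
        have "B.fv (Suc k) j0 = None"
        using k proof (cases rule: B.step_cases)
          case full thus ?thesis using qAB FBs_def by simp
        next
          case (place qB)
          have "qB = qA"
            by (rule cdist_argmin_unique[OF pn place(1) qAB[unfolded FBs_def] FBn[unfolded FBs_def]])
               (use place(2) \<open>\<forall>r\<in>free_sites n T (A.occ k). _\<close> FBsub FA_def FBs_def p_def in auto)
          thus ?thesis using place(4) lt Bj0 p_def by simp
        qed
        thus ?thesis using Aj0 by simp
      qed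
    qed
  qed
qed

lemma fv_outside_Suc:
  assumes k: "k < n" and q: "q < n" "q \<notin> T"
    and Iq: "B.fv k q = A.fv k q \<or> (A.fv k q = None \<and> B.fv k q = Some i)"
  shows "B.fv (Suc k) q = A.fv (Suc k) q \<or> (A.fv (Suc k) q = None \<and> B.fv (Suc k) q = Some i)"
proof -
  define s where "s = fst (L!k)"
  define p where "p = snd (L!k)"
  define FA where "FA = free_sites n T (A.occ k)"
  define FBs where "FBs = free_sites n (T - {j0}) (B.occ k)"
  have FBsub: "FBs \<subseteq> FA" using free_B_subset[OF k code_B_eq_jump[OF less_imp_le[OF k]]] FA_def FBs_def by simp
  have Ci: "B.fv k q = Some i \<longrightarrow> s = i" using fv_B_max_size[OF k] s_def by simp
  show ?thesis
  using k proof (cases rule: A.step_cases)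
    case Anone: full
    have fbe: "FBs = {}" using free_B_empty[OF k code_B_eq_jump[OF less_imp_le[OF k]]] Anone(1) FBs_def by simp
    have Bn: "B.fv (Suc k) = (\<lambda>q. if q < n \<and> B.fv k q = None then Some s else B.fv k q)"
      using k proof (cases rule: B.step_cases)
      case full thus ?thesis unfolding s_def by simp
    next
      case (place qB) thus ?thesis using fbe FBs_def by simp
    qed
    show ?thesis by (rule first_visit_step[where vA = "q < n" and vB = "q < n" and s = s]) (use Ci q Iq Bn Anone(3) s_def in simp_all)
  next
    case Asome: (place qA)
    show ?thesis
    using k proof (cases rule: B.step_cases)
      case Bnone: full
      have b: "(q < n) \<and> \<not>(q < n \<and> cdist n p q \<le> cdist n p qA) \<longrightarrow> s = i"
      proof
        assume a: "(q < n) \<and> \<not>(q < n \<and> cdist n p q \<le> cdist n p qA)"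
        show "s = i" unfolding s_def
          by (rule late_visitor_size[OF k Asome(1,2), of undefined q]) (use Bnone(1) a q Asome(3) p_def in auto)
      qed
      show ?thesis by (rule first_visit_step[where vA = "q < n \<and> cdist n p q \<le> cdist n p qA" and vB = "q < n" and s = s])
        (use Ci q b Iq Asome(4) Bnone(3) s_def p_def in simp_all)
    next
      case Bsome: (place qB)
      have ab: "cdist n p qA \<le> cdist n p qB" using Asome(2) Bsome(1) FBsub FA_def FBs_def p_def by auto
      have b: "(q < n \<and> cdist n p q \<le> cdist n p qB) \<and> \<not>(q < n \<and> cdist n p q \<le> cdist n p qA) \<longrightarrow> s = i"
      proof
        assume a: "(q < n \<and> cdist n p q \<le> cdist n p qB) \<and> \<not>(q < n \<and> cdist n p q \<le> cdist n p qA)"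
        show "s = i" unfolding s_def
          by (rule late_visitor_size[OF k Asome(1,2), of qB q]) (use Bsome(1,2) a q Asome(3) p_def in auto)
      qed
      show ?thesis by (rule first_visit_step[where vA = "q < n \<and> cdist n p q \<le> cdist n p qA" and vB = "q < n \<and> cdist n p q \<le> cdist n p qB" and s = s])
        (use Ci q b ab Iq Asome(4) Bsome(4) s_def p_def in simp_all)
    qed
  qed
qed

lemma fv_B_j0: "k \<le> n \<Longrightarrow> B.fv k j0 = A.occ k j0"
  by (induction k) (simp_all add: A.state_0 B.state_0 fv_B_j0_Suc)

lemma fv_outside: "k \<le> n \<Longrightarrow> q < n \<Longrightarrow> q \<notin> T \<Longrightarrow>
    B.fv k q = A.fv k q \<or> (A.fv k q = None \<and> B.fv k q = Some i)"
  by (induction k) (simp_all add: A.state_0 B.state_0 fv_outside_Suc)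

theorem queue_wt_remove_terminal: "queue_wt t n (T - {j0}) i x = t (the (A.occ n j0)) * queue_wt t n T i x"
proof -
  have e: "{..<n} - (T - {j0}) = insert j0 ({..<n} - T)" using j0T j0n by auto
  have wB: "queue_wt t n (T - {j0}) i x = (\<Prod>p\<in>{..<n} - (T - {j0}). t (the (B.fv n p)))"
    unfolding queue_wt_def B.state_n by simp
  have wA: "queue_wt t n T i x = (\<Prod>p\<in>{..<n} - T. t (the (A.fv n p)))"
    unfolding queue_wt_def A.state_n by simp
  have "(\<Prod>p\<in>{..<n} - (T - {j0}). t (the (B.fv n p))) = t (the (B.fv n j0)) * (\<Prod>p\<in>{..<n} - T. t (the (B.fv n p)))"
    unfolding e using j0T by (subst prod.insert) auto
  also have "(\<Prod>p\<in>{..<n} - T. t (the (B.fv n p))) = (\<Prod>p\<in>{..<n} - T. t (the (A.fv n p)))"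
  proof (rule prod.cong)
    fix q assume q: "q \<in> {..<n} - T"
    have "T \<subset> {..<n}" using Tn q by auto
    hence "card T < n" using psubset_card_mono[of "{..<n}" T] by simp
    hence "A.fv n q \<noteq> None" using A.fv_final_defined q by simp
    thus "t (the (B.fv n q)) = t (the (A.fv n q))" using fv_outside[of n q] q by auto
  qed simp
  finally show ?thesis using wA wB fv_B_j0[of n] by simp
qed

end

end

lemma queue_out_remove_site:
  assumes "T \<subseteq> {..<n}" "j0 < n" "j0 \<notin> T" "length x = n" "\<And>p. p < n \<Longrightarrow> x!p \<noteq> \<infinity> \<Longrightarrow> x!p < enat i"
  shows "queue_out n T i x = jump (queue_out n (insert j0 T) i x) j0"
proof -
  interpret C: queue_pair n "insert j0 T" i x j0 by unfold_locales (use assms in auto)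
  show ?thesis using C.queue_out_remove_terminal assms(3) by simp
qed

lemma queue_wt_remove_site:
  assumes "T \<subseteq> {..<n}" "j0 < n" "j0 \<notin> T" "length x = n" "\<And>p. p < n \<Longrightarrow> x!p \<noteq> \<infinity> \<Longrightarrow> x!p < enat i"
    and j: "j0 < j" "j < n" "\<forall>q. j0 < q \<and> q \<le> j \<longrightarrow> q \<in> T" "queue_out n (insert j0 T) i x ! j = enat i"
  shows "queue_wt t n T i x = t (the_enat (queue_out n (insert j0 T) i x ! j0)) * queue_wt t n (insert j0 T) i x"
proof -
  interpret C: queue_pair n "insert j0 T" i x j0 by unfold_locales (use assms in auto)
  have out: "queue_out n (insert j0 T) i x ! q = enat (the (C.A.occ n q))" if "q < n" "q \<in> insert j0 T" for q
    unfolding queue_out_def C.A.state_n[symmetric] using C.A.occ_final_iff that by (auto split: option.split)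
  have "C.A.occ n j \<noteq> None" using C.A.occ_final_iff j by simp
  hence "C.A.occ n j = Some i" using out[of j] j by auto
  hence "queue_wt t n (insert j0 T - {j0}) i x = t (the (C.A.occ n j0)) * queue_wt t n (insert j0 T) i x"
    using C.queue_wt_remove_terminal[OF j(1,2)] j(3) by auto
  thus ?thesis using out[of j0] assms(2,3) by simp
qed

section \<open>Multi-line queues\<close>

lemma mlq_out_snoc: "mlq_out n i (Ts @ [T]) x = queue_out n T (i + length Ts) (mlq_out n i Ts x)"
  by (induction Ts arbitrary: i x) auto

lemma mlq_wt_snoc: "mlq_wt t n i (Ts @ [T]) x = mlq_wt t n i Ts x * queue_wt t n T (i + length Ts) (mlq_out n i Ts x)"
  by (induction Ts arbitrary: i x) (auto simp: mult.assoc)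

lemma mlq_word_props: "(\<forall>T\<in>set Ts. T \<subseteq> {..<n}) \<Longrightarrow>
   length (mlq_word n Ts) = n \<and>
   (\<forall>p<n. mlq_word n Ts ! p \<noteq> \<infinity> \<longrightarrow> mlq_word n Ts ! p < enat (Suc (length Ts)) \<and> mlq_word n Ts ! p \<noteq> 0) \<and>
   (\<forall>p<n. mlq_word n Ts ! p \<noteq> \<infinity> \<longleftrightarrow> (Ts \<noteq> [] \<and> p \<in> last Ts))"
proof (induction Ts rule: rev_induct)
  case Nil thus ?case by (simp add: mlq_word_def)
next
  case (snoc T Ts)
  define y where "y = mlq_word n Ts"
  have IH: "length y = n" "\<And>p. p < n \<Longrightarrow> y ! p \<noteq> \<infinity> \<Longrightarrow> y ! p < enat (Suc (length Ts)) \<and> y ! p \<noteq> 0"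
    using snoc y_def by auto
  have Tn: "T \<subseteq> {..<n}" using snoc by simp
  interpret Q: level_queue n T "Suc (length Ts)" y
    by unfold_locales (use Tn IH in \<open>auto simp: zero_enat_def\<close>)
  have e: "mlq_word n (Ts @ [T]) = queue_out n T (Suc (length Ts)) y"
    unfolding mlq_word_def mlq_out_snoc y_def mlq_word_def by simp
  have c1: "length (mlq_word n (Ts @ [T])) = n" using e by simp
  have c2: "\<forall>p<n. mlq_word n (Ts @ [T]) ! p \<noteq> \<infinity> \<longrightarrow> mlq_word n (Ts @ [T]) ! p < enat (Suc (length (Ts @ [T]))) \<and> mlq_word n (Ts @ [T]) ! p \<noteq> 0"
  proof (intro allI impI)
    fix p assume p: "p < n" "mlq_word n (Ts @ [T]) ! p \<noteq> \<infinity>"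
    have "queue_out n T (Suc (length Ts)) y ! p \<noteq> 0 \<and> queue_out n T (Suc (length Ts)) y ! p \<le> enat (Suc (length Ts))"
      using Q.queue_out_range p e by simp
    thus "mlq_word n (Ts @ [T]) ! p < enat (Suc (length (Ts @ [T]))) \<and> mlq_word n (Ts @ [T]) ! p \<noteq> 0"
      using e by (cases "queue_out n T (Suc (length Ts)) y ! p") auto
  qed
  have c3: "\<forall>p<n. mlq_word n (Ts @ [T]) ! p \<noteq> \<infinity> \<longleftrightarrow> (Ts @ [T] \<noteq> [] \<and> p \<in> last (Ts @ [T]))"
    using Q.queue_out_finite_iff e by simp
  show ?case using c1 c2 c3 by blast
qed

lemma length_le_sum_list: "\<forall>a\<in>set m. 0 < (a::nat) \<Longrightarrow> length m \<le> sum_list m"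
  by (induction m) auto

lemma is_mlq_snocD: assumes "is_mlq n m (Ts0 @ [T])"
  shows "m = butlast m @ [last m]" "length (butlast m) = length Ts0" "T \<subseteq> {..<n}" "card T = sum_list m"
    "\<forall>T'\<in>set Ts0. T' \<subseteq> {..<n}" "0 < last m"
    "Ts0 \<noteq> [] \<Longrightarrow> card (last Ts0) = sum_list (butlast m)"
proof -
  have ne: "m \<noteq> []" using assms by (simp add: is_mlq_def is_type_def)
  show m: "m = butlast m @ [last m]" using ne by simp
  have lm: "length m = Suc (length Ts0)" using assms by (simp add: is_mlq_def)
  show lb: "length (butlast m) = length Ts0" using lm by simp
  have A: "\<And>l. l < length m \<Longrightarrow> (Ts0 @ [T]) ! l \<subseteq> {..<n} \<and> card ((Ts0 @ [T]) ! l) = sum_list (take (Suc l) m)"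
    using assms by (simp add: is_mlq_def)
  have "T \<subseteq> {..<n} \<and> card T = sum_list (take (Suc (length Ts0)) m)" using A[of "length Ts0"] lm by simp
  thus "T \<subseteq> {..<n}" "card T = sum_list m" using lm by auto
  show "\<forall>T'\<in>set Ts0. T' \<subseteq> {..<n}"
  proof
    fix T' assume "T' \<in> set Ts0"
    then obtain l where l: "l < length Ts0" "Ts0 ! l = T'" by (auto simp: in_set_conv_nth)
    thus "T' \<subseteq> {..<n}" using A[of l] lm by (simp add: nth_append)
  qed
  show "0 < last m" using assms ne by (simp add: is_mlq_def is_type_def)
  assume ne0: "Ts0 \<noteq> []"
  have l1: "length Ts0 - 1 < length m" using lm by simp
  have "card ((Ts0 @ [T]) ! (length Ts0 - 1)) = sum_list (take (Suc (length Ts0 - 1)) m)" using A[OF l1] by simp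
  moreover have "(Ts0 @ [T]) ! (length Ts0 - 1) = last Ts0" using ne0 by (simp add: nth_append last_conv_nth)
  moreover have "take (Suc (length Ts0 - 1)) m = butlast m" using ne0 lm by (simp add: butlast_conv_take)
  ultimately show "card (last Ts0) = sum_list (butlast m)" by simp
qed

lemma is_mlq_snoc_replace: assumes "is_mlq n m (Ts0 @ [T])" "T' \<subseteq> {..<n}" "0 < a" "card T' = sum_list (butlast m) + a"
  shows "is_mlq n (butlast m @ [a]) (Ts0 @ [T'])"
proof -
  have ne: "m \<noteq> []" using assms by (simp add: is_mlq_def is_type_def)
  have lm: "length m = Suc (length Ts0)" using assms by (simp add: is_mlq_def)
  have A: "\<And>l. l < length m \<Longrightarrow> (Ts0 @ [T]) ! l \<subseteq> {..<n} \<and> card ((Ts0 @ [T]) ! l) = sum_list (take (Suc l) m)"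
    using assms by (simp add: is_mlq_def)
  have pos: "\<forall>b\<in>set (butlast m). 0 < b" using assms(1) by (simp add: is_mlq_def is_type_def in_set_butlastD)
  have cn: "card T' \<le> n" using card_mono[OF _ assms(2)] by simp
  show ?thesis unfolding is_mlq_def is_type_def
  proof (intro conjI allI impI)
    show "butlast m @ [a] \<noteq> []" by simp
    show "\<forall>b\<in>set (butlast m @ [a]). 0 < b" using pos assms(3) by auto
    show "sum_list (butlast m @ [a]) \<le> n" using cn assms(4) by simp
    show "length (Ts0 @ [T']) = length (butlast m @ [a])" using lm by simp
    fix l assume l: "l < length (butlast m @ [a])"
    show "(Ts0 @ [T']) ! l \<subseteq> {..<n}"
    proof (cases "l < length Ts0")
      case True thus ?thesis using A[of l] lm by (simp add: nth_append)
    next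
      case False thus ?thesis using l lm assms(2) by (simp add: nth_append)
    qed
    show "card ((Ts0 @ [T']) ! l) = sum_list (take (Suc l) (butlast m @ [a]))"
    proof (cases "l < length Ts0")
      case True
      have "take (Suc l) (butlast m @ [a]) = take (Suc l) m"
        using True lm by (simp add: butlast_conv_take min_def)
      thus ?thesis using A[of l] lm True by (simp add: nth_append)
    next
      case False
      hence "l = length Ts0" using l lm by simp
      thus ?thesis using lm assms(4) by (simp add: nth_append)
    qed
  qed
qed

lemma mlq_word_snoc: "mlq_word n (Ts @ [T]) = queue_out n T (Suc (length Ts)) (mlq_word n Ts)"
  unfolding mlq_word_def mlq_out_snoc by simp

lemma mlq_weight_snoc:
  "mlq_weight t n (Ts @ [T]) = mlq_weight t n Ts * queue_wt t n T (Suc (length Ts)) (mlq_word n Ts)"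
  unfolding mlq_weight_def mlq_wt_snoc mlq_word_def by simp

lemma mlq_snoc_last_queue:
  assumes "is_mlq n m (Ts0 @ [T])" "T' \<subseteq> {..<n}"
  shows "level_queue n T' (Suc (length Ts0)) (mlq_word n Ts0)"
  using mlq_word_props[OF is_mlq_snocD(5)[OF assms(1)]] assms(2)
  by unfold_locales (auto simp: zero_enat_def)

lemma card_finite_mlq_word:
  assumes "is_mlq n m (Ts0 @ [T])"
  shows "card {p. p < n \<and> mlq_word n Ts0 ! p \<noteq> \<infinity>} = sum_list (butlast m)"
proof -
  note sp = is_mlq_snocD[OF assms]
  have "Ts0 \<noteq> [] \<Longrightarrow> last Ts0 \<subseteq> {..<n}" using sp(5) by simp
  hence "{p. p < n \<and> mlq_word n Ts0 ! p \<noteq> \<infinity>} = (if Ts0 = [] then {} else last Ts0)"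
    using mlq_word_props[OF sp(5)] by (auto simp: subset_iff)
  moreover have "Ts0 = [] \<Longrightarrow> butlast m = []" using sp(2) by (metis length_0_conv)
  ultimately show ?thesis using sp(7) by auto
qed

lemma maxsize_mlq_word_snoc:
  assumes "is_mlq n m (Ts0 @ [T])"
  shows "maxsize (mlq_word n (Ts0 @ [T])) = Suc (length Ts0)"
proof -
  note sp = is_mlq_snocD[OF assms]
  interpret Q: level_queue n T "Suc (length Ts0)" "mlq_word n Ts0" by (rule mlq_snoc_last_queue[OF assms sp(3)])
  have "sum_list (butlast m @ [last m]) = sum_list (butlast m) + last m" by simp
  hence "card T = sum_list (butlast m) + last m" using sp(1,4) by metis
  hence "Q.npart < card T" using card_finite_mlq_word[OF assms] sp(6) unfolding Q.npart_def by simp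
  then obtain q where q: "q < n" "queue_out n T (Suc (length Ts0)) (mlq_word n Ts0) ! q = enat (Suc (length Ts0))"
    using Q.queue_out_has_level by blast
  show ?thesis unfolding mlq_word_snoc
  proof (rule maxsize_eq)
    fix e assume e: "e \<in> set (queue_out n T (Suc (length Ts0)) (mlq_word n Ts0))" "e \<noteq> \<infinity>"
    then obtain p where "p < n" "queue_out n T (Suc (length Ts0)) (mlq_word n Ts0) ! p = e"
      by (auto simp: in_set_conv_nth)
    thus "e \<le> enat (Suc (length Ts0))" using Q.queue_out_range e(2) by blast
  qed (use q in \<open>metis in_set_conv_nth Q.length_queue_out\<close>)
qed

section \<open>The bijection\<close>

definition add_terminal :: "nat \<Rightarrow> nat set list \<Rightarrow> nat set list" where
  "add_terminal j0 Ts = butlast Ts @ [insert j0 (last Ts)]"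

definition remove_terminal :: "nat \<Rightarrow> nat set list \<Rightarrow> nat set list" where
  "remove_terminal j0 Ts = butlast Ts @ [last Ts - {j0}]"

locale lemma5p4_setting =
  fixes u v :: "enat list" and j0 j :: nat
  assumes word: "is_word (u @ v)" and u_ne: "u \<noteq> []" and v_ne: "v \<noteq> []"
    and v_less_u: "\<forall>a\<in>set u. \<forall>b\<in>set v. b < a"
    and j0u: "j0 < length u" and u_j0: "u ! j0 = \<infinity>"
    and jj: "j0 < j" "j < length u" "u ! j \<noteq> \<infinity>" "\<forall>x\<in>set (u @ v). x \<noteq> \<infinity> \<longrightarrow> x \<le> u ! j"
      "\<forall>i. j0 < i \<and> i < j \<longrightarrow> u ! i \<noteq> \<infinity> \<and> u ! i \<noteq> u ! j"
begin

abbreviation "N \<equiv> length (u @ v)"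
abbreviation "k \<equiv> length u"
abbreviation "M \<equiv> maxsize (u @ v)"

definition "preimages = {u'. length u' = length u \<and> is_word u'
                     \<and> (\<forall>x\<in>set u'. x \<noteq> \<infinity> \<longrightarrow> x \<le> enat (maxsize (u @ v)))
                     \<and> u' ! j0 \<noteq> \<infinity> \<and> jump u' j0 = u}"

definition "mlqs w = {Ts. \<exists>m. is_mlq N m Ts \<and> mlq_word N Ts = w}"

lemma u_max_site: "u ! j = enat M"
proof -
  obtain M0 where M0: "u!j = enat M0" using jj(3) by auto
  have "u!j \<in> set (u @ v)" using jj(2) by simp
  hence "maxsize (u @ v) = M0" using jj(4) M0 by (intro maxsize_eq) auto
  thus ?thesis using M0 by simp
qed

lemma max_pos: "0 < M"
proof -
  have "u!j \<in> set (u @ v)" using jj(2) by simp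
  hence "u!j \<noteq> 0" using word by (auto simp: is_word_def)
  thus ?thesis using u_max_site by (simp add: zero_enat_def)
qed

lemma v_less_max: "b \<in> set v \<Longrightarrow> b < enat M"
  using v_less_u jj(2) u_max_site by (metis nth_mem)

lemma finite_between: "j0 < q \<Longrightarrow> q \<le> j \<Longrightarrow> (u @ v) ! q \<noteq> \<infinity>"
  using jj by (cases "q = j") (auto simp: nth_append)

text \<open>A word whose jump at \<open>j0\<close> is \<open>uv\<close>, with no particle larger than those of \<open>uv\<close>, is \<open>u'v\<close> for
  a preimage \<open>u'\<close>: the jump past the maximal particle at \<open>j\<close> leaves the tail untouched, and the
  particle leaving \<open>j0\<close> lands in \<open>u\<close>, above all of \<open>v\<close>.\<close>
lemma jump_eq_uv:
  assumes y: "length y = N" "y!j0 \<noteq> \<infinity>" "\<And>e. e \<in> set y \<Longrightarrow> e \<noteq> \<infinity> \<Longrightarrow> e \<le> enat M"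
    and jy: "jump y j0 = u @ v"
  shows "y!j = enat M" "drop k y = v" "\<exists>q. j0 < q \<and> q \<le> j \<and> u!q = y!j0"
proof -
  interpret Y: cyclic_start y j0 by unfold_locales (use y(1) j0u in simp)
  have K: "enat M \<noteq> \<infinity>" by simp
  have bnd: "\<And>q. q < length y \<Longrightarrow> y!q \<noteq> \<infinity> \<Longrightarrow> y!q \<le> enat M" using y(3) by simp
  have jN: "j < length y" using y(1) jj(2) by simp
  have wj: "jump y j0 ! j = enat M" using jy u_max_site jj(2) by (simp add: nth_append)
  show yj: "y!j = enat M" by (rule Y.jump_nth_eq_bound[OF y(2) K bnd jN wj])
  obtain q where q: "0 < Y.ofs q" "Y.ofs q \<le> Y.ofs j" "q < length y" "jump y j0 ! q = y!j0"
    using Y.jump_start_lands[OF y(2) K bnd jN yj wj] by blast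
  hence "j0 < q" "q \<le> j" using cdist_le_imp_between[OF jj(1) jN] by auto
  thus "\<exists>q. j0 < q \<and> q \<le> j \<and> u!q = y!j0" using q(4) jy jj(2) by (auto simp: nth_append)
  show "drop k y = v"
  proof (rule nth_equalityI)
    show "length (drop k y) = length v" using y(1) by simp
    fix p assume p: "p < length (drop k y)"
    hence "Y.ofs j < Y.ofs (k + p)" "k + p < length y"
      using cdist_of_ge[of j0 j "length y"] cdist_of_ge[of j0 "k + p" "length y"] jj j0u y(1) by auto
    hence "y ! (k + p) = (u @ v) ! (k + p)"
      using Y.jump_nth_after_bound[OF y(2) K bnd jN yj, of "k + p"] jy by simp
    thus "drop k y ! p = v ! p" using p y(1) by (simp add: nth_append)
  qed
qed

lemma take_jump_eq_uv:
  assumes y: "length y = N" "y!j0 \<noteq> \<infinity>" "\<And>e. e \<in> set y \<Longrightarrow> e \<noteq> \<infinity> \<Longrightarrow> e \<le> enat M" "is_word y"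
    and jy: "jump y j0 = u @ v"
  shows "take k y \<in> preimages"
proof -
  obtain q where q: "j0 < q" "q \<le> j" "u!q = y!j0" using jump_eq_uv[OF y(1-3) jy] by blast
  have qin: "u!q \<in> set u" using q(2) jj(2) by simp
  have "y = take k y @ v" using jump_eq_uv(2)[OF y(1-3) jy] append_take_drop_id[of k y] by simp
  moreover have "jump (take k y @ v) j0 = jump (take k y) j0 @ v"
  proof (rule jump_append_small)
    show "j0 < length (take k y)" "take k y ! j0 \<noteq> \<infinity>" using y(1,2) j0u by simp_all
    fix e assume "e \<in> set v" "e \<noteq> \<infinity>"
    hence "e < u!q" using v_less_u qin by blast
    thus "e \<le> take k y ! j0" using q j0u by simp
  qed
  ultimately have "jump (take k y) j0 = u" using jy by simp
  thus ?thesis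
    using y j0u by (auto simp: preimages_def is_word_def dest: in_set_takeD)
qed

lemma preimage_props:
  assumes "u' \<in> preimages"
  shows "jump (u' @ v) j0 = u @ v" "maxsize (u' @ v) = M" "u'!j = enat M"
    "\<exists>q. j0 < q \<and> q \<le> j \<and> u!q = u'!j0"
    "\<And>a. a < k \<Longrightarrow> u'!a \<noteq> \<infinity> \<Longrightarrow> u'!a = u!a \<or> u'!j0 \<le> u'!a"
proof -
  have u': "length u' = k" "u'!j0 \<noteq> \<infinity>" "jump u' j0 = u" "\<And>x. x \<in> set u' \<Longrightarrow> x \<noteq> \<infinity> \<Longrightarrow> x \<le> enat M"
    using assms unfolding preimages_def by auto
  interpret X: cyclic_start u' j0 by unfold_locales (use u' j0u in simp)
  have K: "enat M \<noteq> \<infinity>" by simp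
  have bnd: "\<And>q. q < length u' \<Longrightarrow> u'!q \<noteq> \<infinity> \<Longrightarrow> u'!q \<le> enat M" using u'(4) by simp
  have jl: "j < length u'" using u'(1) jj by simp
  have wj: "jump u' j0 ! j = enat M" using u'(3) u_max_site by simp
  show uj: "u'!j = enat M" by (rule X.jump_nth_eq_bound[OF u'(2) K bnd jl wj])
  obtain q where q: "0 < X.ofs q" "X.ofs q \<le> X.ofs j" "q < length u'" "jump u' j0 ! q = u'!j0"
    using X.jump_start_lands[OF u'(2) K bnd jl uj wj] by blast
  have "j0 < q" "q \<le> j" using cdist_le_imp_between[OF jj(1) jl q(3,1,2)] by auto
  moreover have "u!q = u'!j0" using q(4) u'(3) by simp
  ultimately show ex: "\<exists>q. j0 < q \<and> q \<le> j \<and> u!q = u'!j0" by blast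
  have qin: "u!q \<in> set u" using \<open>q \<le> j\<close> jj(2) by simp
  have "jump (u' @ v) j0 = jump u' j0 @ v"
  proof (rule jump_append_small)
    fix e assume "e \<in> set v" "e \<noteq> \<infinity>"
    hence "e < u!q" using v_less_u qin by blast
    thus "e \<le> u'!j0" using \<open>u!q = u'!j0\<close> by simp
  qed (use u' j0u in simp_all)
  thus "jump (u' @ v) j0 = u @ v" using u'(3) by simp
  have "enat M \<in> set (u' @ v)" using uj jl by (metis Un_iff in_set_conv_nth set_append)
  thus "maxsize (u' @ v) = M"
  proof (intro maxsize_eq)
    fix e assume e: "e \<in> set (u' @ v)" "e \<noteq> \<infinity>"
    show "e \<le> enat M"
    proof (cases "e \<in> set u'")
      case False thus ?thesis using e(1) v_less_max[of e] by simp
    qed (use u'(4) e(2) in blast)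
  qed
  fix a assume a: "a < k" "u'!a \<noteq> \<infinity>"
  have "jump u' j0 ! a = u'!a \<or> u'!j0 \<le> u'!a" using X.jump_nth_cases[OF u'(2) _ a(2)] a(1) u'(1) by simp
  thus "u'!a = u!a \<or> u'!j0 \<le> u'!a" using u'(3) by metis
qed

lemma preimage_decomposable:
  assumes "u' \<in> preimages" shows "decomposable (u' @ v)"
  unfolding decomposable_def
proof (intro exI[of _ k] conjI allI impI)
  have u'k: "length u' = k" using assms unfolding preimages_def by simp
  obtain q where q: "j0 < q" "q \<le> j" "u!q = u'!j0" using preimage_props(4)[OF assms] by blast
  have qin: "u!q \<in> set u" using q(2) jj(2) by (metis le_less_trans nth_mem)
  show "0 < k" "k < length (u' @ v)" using u_ne v_ne u'k by simp_all
  fix a b assume a: "a < k" and b: "k \<le> b \<and> b < length (u' @ v)"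
  have "b - k < length v" using b u'k length_append[of u' v] by linarith
  hence vb: "(u' @ v) ! b \<in> set v" using b u'k by (simp add: nth_append)
  have ua: "(u' @ v) ! a = u'!a" using a u'k by (simp add: nth_append)
  show "(u' @ v) ! b < (u' @ v) ! a"
  proof (cases "u'!a = \<infinity>")
    case True thus ?thesis using v_less_max[OF vb] ua by (cases "(u' @ v) ! b") auto
  next
    case False
    hence "u'!a = u!a \<or> u'!j0 \<le> u'!a" using preimage_props(5)[OF assms a] by simp
    moreover have "(u' @ v) ! b < u!a" using v_less_u vb a by simp
    moreover have "(u' @ v) ! b < u!q" using v_less_u vb qin by simp
    ultimately show ?thesis using q(3) ua by (auto dest: order.strict_trans2)
  qed
qed

lemma preimage_simpler:
  assumes "u' \<in> preimages" shows "simpler (u' @ v) (u @ v)"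
proof -
  have u': "length u' = k" "u'!j0 \<noteq> \<infinity>" "jump u' j0 = u" "\<And>x. x \<in> set u' \<Longrightarrow> x \<noteq> \<infinity> \<Longrightarrow> x \<le> enat M"
    using assms unfolding preimages_def by auto
  interpret X: cyclic_start u' j0 by unfold_locales (use u' j0u in simp)
  have bnd: "\<And>q. q < length u' \<Longrightarrow> u'!q \<noteq> \<infinity> \<Longrightarrow> u'!q \<le> enat M" using u'(4) by simp
  have "card {q. q < length u' \<and> u'!q = enat M} = Suc (card {q. q < length u' \<and> jump u' j0 ! q = enat M})"
    by (rule X.card_jump_bound_sites[OF u'(2) _ bnd _ preimage_props(3)[OF assms]]) (use u'(1) jj(2) in simp_all)
  hence "count_list u' (enat M) = Suc (count_list u (enat M))"
    using u'(1,3) by (simp only: count_list_card length_jump)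
  hence "count_list (u' @ v) (enat M) = Suc (count_list (u @ v) (enat M))" by simp
  hence "simpler_type (word_type (u' @ v)) (word_type (u @ v))"
    unfolding simpler_type_def word_type_def preimage_props(2)[OF assms] using max_pos by simp
  thus ?thesis by (simp add: simpler_def)
qed

lemma mlqs_snoc:
  assumes "Ts \<in> mlqs w"
  obtains m Ts0 T where "is_mlq N m (Ts0 @ [T])" "Ts = Ts0 @ [T]"
    "queue_out N T (Suc (length Ts0)) (mlq_word N Ts0) = w"
proof -
  obtain m where m: "is_mlq N m Ts" "mlq_word N Ts = w" using assms unfolding mlqs_def by blast
  have "Ts \<noteq> []" using m(1) by (auto simp: is_mlq_def is_type_def)
  hence "Ts = butlast Ts @ [last Ts]" by simp
  thus ?thesis using that m mlq_word_snoc by metis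
qed

lemma add_terminal_props:
  assumes "Ts \<in> mlqs (u @ v)"
  defines "u' \<equiv> take k (mlq_word N (add_terminal j0 Ts))"
  shows "remove_terminal j0 (add_terminal j0 Ts) = Ts" "u' \<in> preimages"
    "add_terminal j0 Ts \<in> mlqs (u' @ v)"
    "t (the_enat (u' ! j0)) * mlq_weight t N (add_terminal j0 Ts) = mlq_weight t N Ts"
proof -
  obtain m Ts0 T where m: "is_mlq N m (Ts0 @ [T])" "Ts = Ts0 @ [T]"
    "queue_out N T (Suc (length Ts0)) (mlq_word N Ts0) = u @ v"
    using mlqs_snoc[OF assms(1)] by blast
  note sp = is_mlq_snocD[OF m(1)]
  define r where "r = Suc (length Ts0)"
  define x where "x = mlq_word N Ts0"
  define T' where "T' = insert j0 T"
  define y where "y = queue_out N T' r x"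
  have T'n: "T' \<subseteq> {..<N}" using sp(3) j0u unfolding T'_def by simp
  interpret Q: level_queue N T r x unfolding r_def x_def by (rule mlq_snoc_last_queue[OF m(1) sp(3)])
  interpret Q': level_queue N T' r x unfolding r_def x_def by (rule mlq_snoc_last_queue[OF m(1) T'n])
  have wq: "queue_out N T r x = u @ v" using m(3) unfolding r_def x_def .
  have Mr: "M = r" using maxsize_mlq_word_snoc[OF m(1)] m(3) unfolding mlq_word_snoc r_def by simp
  have j0T: "j0 \<notin> T" using Q.queue_out_finite_iff[of j0] wq u_j0 j0u by (simp add: nth_append)
  have jy: "jump y j0 = u @ v"
    using queue_out_remove_site[OF sp(3) _ j0T Q.xlen Q.xfin] wq j0u unfolding y_def T'_def by simp
  have ylen: "length y = N" unfolding y_def by (simp add: queue_out_def)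
  have range: "e \<noteq> 0 \<and> e \<le> enat M" if "e \<in> set y" "e \<noteq> \<infinity>" for e
  proof -
    from that(1) obtain p where "p < length y" "y ! p = e" by (auto simp: in_set_conv_nth)
    thus ?thesis using Q'.queue_out_range[of p] that(2) Mr ylen unfolding y_def by simp
  qed
  have y: "length y = N" "y!j0 \<noteq> \<infinity>" "\<And>e. e \<in> set y \<Longrightarrow> e \<noteq> \<infinity> \<Longrightarrow> e \<le> enat M"
    using ylen Q'.queue_out_finite_iff[of j0] j0u range unfolding y_def T'_def by simp_all
  have "is_word y" unfolding is_word_def
  proof
    fix e assume "e \<in> set y" thus "e \<noteq> 0" using range[of e] by (cases "e = \<infinity>") auto
  qed
  note y = y this
  have Ty: "mlq_word N (add_terminal j0 Ts) = y"
    unfolding add_terminal_def m(2) y_def T'_def r_def x_def by (simp add: mlq_word_snoc)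
  have yv: "y = u' @ v" using jump_eq_uv(2)[OF y(1-3) jy] append_take_drop_id[of k y] Ty u'_def by simp
  show "remove_terminal j0 (add_terminal j0 Ts) = Ts"
    using j0T unfolding add_terminal_def remove_terminal_def m(2) by simp
  show "u' \<in> preimages" using take_jump_eq_uv[OF y jy] Ty u'_def by simp
  have "sum_list (butlast m @ [last m]) = sum_list (butlast m) + last m" by simp
  hence "card T = sum_list (butlast m) + last m" using sp(1,4) by metis
  hence "card T' = sum_list (butlast m) + (last m + 1)" using j0T Q.finT unfolding T'_def by simp
  hence "is_mlq N (butlast m @ [last m + 1]) (Ts0 @ [T'])" using is_mlq_snoc_replace[OF m(1) T'n] by simp
  moreover have "mlq_word N (Ts0 @ [T']) = u' @ v" using Ty yv unfolding add_terminal_def m(2) T'_def by simp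
  ultimately show "add_terminal j0 Ts \<in> mlqs (u' @ v)"
    unfolding mlqs_def add_terminal_def m(2) T'_def by auto
  have "q \<in> T" if "j0 < q" "q \<le> j" for q
    using finite_between[OF that] Q.queue_out_finite_iff[of q] wq that(2) jj(2) by simp
  moreover have "y ! j = enat r" using jump_eq_uv(1)[OF y(1-3) jy] Mr by simp
  ultimately have "queue_wt t N T r x = t (the_enat (y ! j0)) * queue_wt t N T' r x"
    using queue_wt_remove_site[OF sp(3) _ j0T Q.xlen Q.xfin jj(1)] j0u jj(2)
    unfolding y_def T'_def by simp
  moreover have "u' ! j0 = y ! j0" using Ty j0u u'_def by simp
  ultimately show "t (the_enat (u' ! j0)) * mlq_weight t N (add_terminal j0 Ts) = mlq_weight t N Ts"
    unfolding add_terminal_def m(2) mlq_weight_snoc r_def x_def T'_def by (simp add: mult_ac)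
qed

lemma remove_terminal_props:
  assumes u': "u' \<in> preimages" and Ts': "Ts' \<in> mlqs (u' @ v)"
  shows "remove_terminal j0 Ts' \<in> mlqs (u @ v)" "add_terminal j0 (remove_terminal j0 Ts') = Ts'"
    "take k (mlq_word N Ts') = u'"
proof -
  have u'k: "length u' = k" "u'!j0 \<noteq> \<infinity>" using u' unfolding preimages_def by auto
  show "take k (mlq_word N Ts') = u'" using Ts' u'k unfolding mlqs_def by auto
  obtain m Ts0 T' where m: "is_mlq N m (Ts0 @ [T'])" "Ts' = Ts0 @ [T']"
    "queue_out N T' (Suc (length Ts0)) (mlq_word N Ts0) = u' @ v"
    using mlqs_snoc[OF Ts'] by blast
  note sp = is_mlq_snocD[OF m(1)]
  define r where "r = Suc (length Ts0)"
  define x where "x = mlq_word N Ts0"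
  define T where "T = T' - {j0}"
  have Tn: "T \<subseteq> {..<N}" using sp(3) unfolding T_def by auto
  interpret Q': level_queue N T' r x unfolding r_def x_def by (rule mlq_snoc_last_queue[OF m(1) sp(3)])
  interpret Q: level_queue N T r x unfolding r_def x_def by (rule mlq_snoc_last_queue[OF m(1) Tn])
  have wq': "queue_out N T' r x = u' @ v" using m(3) unfolding r_def x_def .
  have "j0 \<in> T'" using Q'.queue_out_finite_iff[of j0] wq' u'k j0u by (simp add: nth_append)
  hence T': "insert j0 T = T'" unfolding T_def by auto
  have "j0 < N" "j0 \<notin> T" using j0u unfolding T_def by auto
  hence "queue_out N T r x = jump (queue_out N T' r x) j0"
    using queue_out_remove_site[OF Tn _ _ Q.xlen Q.xfin] T' by simp
  hence wq: "queue_out N T r x = u @ v" using wq' preimage_props(1)[OF u'] by simp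
  have Mr: "M = r"
    using maxsize_mlq_word_snoc[OF m(1)] m(3) preimage_props(2)[OF u'] unfolding mlq_word_snoc r_def by simp
  have "\<not> card T \<le> Q.npart"
    using Q.queue_out_no_level[of j] wq u_max_site jj(2) Mr by (auto simp: nth_append)
  moreover have "Q.npart = sum_list (butlast m)"
    unfolding Q.npart_def using card_finite_mlq_word[OF m(1)] unfolding x_def .
  ultimately have "is_mlq N (butlast m @ [card T - sum_list (butlast m)]) (Ts0 @ [T])"
    by (intro is_mlq_snoc_replace[OF m(1) Tn]) auto
  moreover have "mlq_word N (Ts0 @ [T]) = u @ v" using wq unfolding r_def x_def mlq_word_snoc .
  ultimately show "remove_terminal j0 Ts' \<in> mlqs (u @ v)"
    unfolding mlqs_def remove_terminal_def m(2) T_def by auto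
  show "add_terminal j0 (remove_terminal j0 Ts') = Ts'"
    using T' unfolding add_terminal_def remove_terminal_def m(2) T_def by simp
qed

lemma finite_mlqs: "finite (mlqs w)"
proof -
  have "mlqs w \<subseteq> {Ts. set Ts \<subseteq> Pow {..<N} \<and> length Ts \<le> N}"
  proof
    fix Ts assume "Ts \<in> mlqs w"
    then obtain m where m: "is_mlq N m Ts" unfolding mlqs_def by blast
    have "length m \<le> sum_list m" using m by (intro length_le_sum_list) (simp add: is_mlq_def is_type_def)
    hence "length Ts \<le> N" using m by (simp add: is_mlq_def is_type_def)
    moreover have "set Ts \<subseteq> Pow {..<N}"
    proof
      fix T assume "T \<in> set Ts"
      then obtain l where "l < length Ts" "Ts ! l = T" by (auto simp: in_set_conv_nth)
      thus "T \<in> Pow {..<N}" using m by (auto simp: is_mlq_def)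
    qed
    ultimately show "Ts \<in> {Ts. set Ts \<subseteq> Pow {..<N} \<and> length Ts \<le> N}" by simp
  qed
  moreover have "finite {Ts. set Ts \<subseteq> Pow {..<N} \<and> length Ts \<le> N}" by (rule finite_lists_length_le) simp
  ultimately show ?thesis by (rule finite_subset)
qed

lemma finite_preimages: "finite preimages"
proof -
  have "preimages \<subseteq> {xs. set xs \<subseteq> insert \<infinity> (enat ` {..M}) \<and> length xs = k}"
  proof
    fix xs assume "xs \<in> preimages"
    hence xs: "length xs = k" "\<And>e. e \<in> set xs \<Longrightarrow> e \<noteq> \<infinity> \<Longrightarrow> e \<le> enat M" unfolding preimages_def by auto
    have "set xs \<subseteq> insert \<infinity> (enat ` {..M})"
    proof
      fix e assume e: "e \<in> set xs"
      show "e \<in> insert \<infinity> (enat ` {..M})"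
      proof (cases e)
        case (enat a) thus ?thesis using xs(2)[OF e] by auto
      next
        case infinity thus ?thesis by simp
      qed
    qed
    thus "xs \<in> {xs. set xs \<subseteq> insert \<infinity> (enat ` {..M}) \<and> length xs = k}" using xs(1) by simp
  qed
  moreover have "finite {xs. set xs \<subseteq> insert \<infinity> (enat ` {..M}) \<and> length xs = k}"
    by (rule finite_lists_length_eq) simp
  ultimately show ?thesis by (rule finite_subset)
qed

lemma word_weight_mlqs: "length w = N \<Longrightarrow> word_weight t w = (\<Sum>Ts\<in>mlqs w. mlq_weight t N Ts)"
  unfolding word_weight_def mlqs_def by simp

theorem word_weight_expansion: "word_weight t (u @ v) = (\<Sum>u'\<in>preimages. t (the_enat (u' ! j0)) * word_weight t (u' @ v))"
proof -
  have lenU: "\<And>u'. u' \<in> preimages \<Longrightarrow> length (u' @ v) = N" unfolding preimages_def by simp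
  have "(\<Sum>u'\<in>preimages. t (the_enat (u' ! j0)) * word_weight t (u' @ v)) =
        (\<Sum>u'\<in>preimages. \<Sum>Ts\<in>mlqs (u' @ v). t (the_enat (u' ! j0)) * mlq_weight t N Ts)"
  proof (rule sum.cong)
    fix x assume x: "x \<in> preimages"
    show "t (the_enat (x ! j0)) * word_weight t (x @ v) = (\<Sum>Ts\<in>mlqs (x @ v). t (the_enat (x ! j0)) * mlq_weight t N Ts)"
      unfolding word_weight_mlqs[OF lenU[OF x]] by (simp add: sum_distrib_left)
  qed simp
  also have "\<dots> = (\<Sum>p\<in>Sigma preimages (\<lambda>u'. mlqs (u' @ v)). t (the_enat (fst p ! j0)) * mlq_weight t N (snd p))"
    using sum.Sigma[OF finite_preimages, of "\<lambda>u'. mlqs (u' @ v)" "\<lambda>u' Ts. t (the_enat (u' ! j0)) * mlq_weight t N Ts"] finite_mlqs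
    by (simp add: case_prod_beta)
  finally have R: "(\<Sum>u'\<in>preimages. t (the_enat (u' ! j0)) * word_weight t (u' @ v)) =
     (\<Sum>p\<in>Sigma preimages (\<lambda>u'. mlqs (u' @ v)). t (the_enat (fst p ! j0)) * mlq_weight t N (snd p))" .
  have L: "word_weight t (u @ v) = (\<Sum>Ts\<in>mlqs (u @ v). mlq_weight t N Ts)" by (rule word_weight_mlqs) simp
  have "(\<Sum>Ts\<in>mlqs (u @ v). mlq_weight t N Ts) =
        (\<Sum>p\<in>Sigma preimages (\<lambda>u'. mlqs (u' @ v)). t (the_enat (fst p ! j0)) * mlq_weight t N (snd p))"
  proof (rule sum.reindex_bij_witness[where i = "\<lambda>p. remove_terminal j0 (snd p)" and j = "\<lambda>Ts. (take k (mlq_word N (add_terminal j0 Ts)), add_terminal j0 Ts)"])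
    fix a assume a: "a \<in> mlqs (u @ v)"
    show "remove_terminal j0 (snd (take k (mlq_word N (add_terminal j0 a)), add_terminal j0 a)) = a" using add_terminal_props(1)[OF a] by simp
    show "(take k (mlq_word N (add_terminal j0 a)), add_terminal j0 a) \<in> Sigma preimages (\<lambda>u'. mlqs (u' @ v))" using add_terminal_props(2,3)[OF a] by simp
    show "t (the_enat (fst (take k (mlq_word N (add_terminal j0 a)), add_terminal j0 a) ! j0)) * mlq_weight t N (snd (take k (mlq_word N (add_terminal j0 a)), add_terminal j0 a)) =
          mlq_weight t N a" using add_terminal_props(4)[OF a] by simp
  next
    fix b assume b: "b \<in> Sigma preimages (\<lambda>u'. mlqs (u' @ v))"
    then obtain u' Ts' where bb: "b = (u', Ts')" "u' \<in> preimages" "Ts' \<in> mlqs (u' @ v)" by auto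
    show "(take k (mlq_word N (add_terminal j0 (remove_terminal j0 (snd b)))), add_terminal j0 (remove_terminal j0 (snd b))) = b"
      using remove_terminal_props[OF bb(2,3)] bb(1) by simp
    show "remove_terminal j0 (snd b) \<in> mlqs (u @ v)" using remove_terminal_props[OF bb(2,3)] bb(1) by simp
  qed
  thus ?thesis using L R by simp
qed

end

theorem lemma5p4:
  fixes t :: "nat \<Rightarrow> 'a::comm_semiring_1" and u v :: "enat list" and j0 :: nat
  assumes "is_word (u @ v)"
    and "u \<noteq> []" and "v \<noteq> []"
    and "\<forall>a\<in>set u. \<forall>b\<in>set v. b < a"
    and "j0 < length u" and "u ! j0 = \<infinity>"
    and "\<exists>j. j0 < j \<and> j < length u \<and> u ! j \<noteq> \<infinity> \<and> (\<forall>x\<in>set (u @ v). x \<noteq> \<infinity> \<longrightarrow> x \<le> u ! j)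
           \<and> (\<forall>i. j0 < i \<and> i < j \<longrightarrow> u ! i \<noteq> \<infinity> \<and> u ! i \<noteq> u ! j)"
  shows "word_weight t (u @ v) =
           (\<Sum>u'\<in>{u'. length u' = length u \<and> is_word u'
                     \<and> (\<forall>x\<in>set u'. x \<noteq> \<infinity> \<longrightarrow> x \<le> enat (maxsize (u @ v)))
                     \<and> u' ! j0 \<noteq> \<infinity> \<and> jump u' j0 = u}.
              t (the_enat (u' ! j0)) * word_weight t (u' @ v))
         \<and> (\<forall>u'. length u' = length u \<and> is_word u'
                     \<and> (\<forall>x\<in>set u'. x \<noteq> \<infinity> \<longrightarrow> x \<le> enat (maxsize (u @ v)))
                     \<and> u' ! j0 \<noteq> \<infinity> \<and> jump u' j0 = u
              \<longrightarrow> decomposable (u' @ v) \<and> simpler (u' @ v) (u @ v))"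
proof -
  obtain j where "j0 < j" "j < length u" "u ! j \<noteq> \<infinity>" "\<forall>x\<in>set (u @ v). x \<noteq> \<infinity> \<longrightarrow> x \<le> u ! j"
     "\<forall>i. j0 < i \<and> i < j \<longrightarrow> u ! i \<noteq> \<infinity> \<and> u ! i \<noteq> u ! j" using assms(7) by blast
  then interpret lemma5p4_setting u v j0 j by unfold_locales (use assms in auto)
  have "word_weight t (u @ v) = (\<Sum>u'\<in>preimages. t (the_enat (u' ! j0)) * word_weight t (u' @ v))"
    by (rule word_weight_expansion)
  moreover have "\<forall>u'. u' \<in> preimages \<longrightarrow> decomposable (u' @ v) \<and> simpler (u' @ v) (u @ v)"
    using preimage_decomposable preimage_simpler by blast
  ultimately show ?thesis unfolding preimages_def mem_Collect_eq by blast
qed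

end
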